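(* For any $k\in\mathbb{Z}$ with $|k|\geq1$, any $\lambda\in\mathbb{R}$ and any $w\in D_k$, with $F$ defined as in the context, $$|k|^{1/2}\|w\|_{H^1}+|k|\|w\|_{L^2}\lesssim\|F\|_{L^2},\qquad \|w\|_{H^1}+|k|^{1/2}\|w\|_{L^2}\lesssim\|F\|_{H^{-1}},$$ with implicit constants independent of $k,\beta_k,\lambda,w$.
   Context: Functions are complex-valued on $r\in(0,\infty)$; $\langle f,g\rangle=\int_0^\infty f\bar g\,dr$; $\|\cdot\|_{L^2}$, $\|\cdot\|_{H^1}$ are the $L^2(0,\infty)$, $H^1(0,\infty)$ norms, and $\|\cdot\|_{H^{-1}}$ is the norm dual to $H^1_0(0,\infty)$ with respect to $\langle\cdot,\cdot\rangle$. $\beta_k\in\mathbb{R}$. $D_k$ is the set of $w\in H^2_{loc}(0,\infty)\cap L^2(0,\infty)$ with $-w''+\big(\frac{k^2-1/4}{r^2}+\frac{r^2}{16}-\frac12\big)w+i\beta_k\frac{w}{r^2}\in L^2(0,\infty)$ (for $|k|\ge1$ equivalently $w'',w/r^2,r^2w\in L^2$); such $w$ satisfy $w(0)=w(\infty)=0$. $F=-\big[w''-\big(\frac{k^2-1/4}{r^2}+\frac{r^2}{16}-\frac12\big)w\big]+i\beta_k\big(\frac1{r^2}-\lambda\big)w$. *)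

theory Defs
  imports "HOL-Analysis.Analysis"
begin

definition L2_on :: "real set \<Rightarrow> (real \<Rightarrow> complex) \<Rightarrow> bool" where
  "L2_on S f \<longleftrightarrow> f measurable_on S \<and> (\<lambda>r. (cmod (f r))\<^sup>2) integrable_on S"

definition L2norm :: "(real \<Rightarrow> complex) \<Rightarrow> real" where
  "L2norm f = sqrt (integral {0<..} (\<lambda>r. (cmod (f r))\<^sup>2))"

definition H1norm :: "(real \<Rightarrow> complex) \<Rightarrow> (real \<Rightarrow> complex) \<Rightarrow> real" where
  "H1norm f f' = sqrt ((L2norm f)\<^sup>2 + (L2norm f')\<^sup>2)"

definition H10 :: "(real \<Rightarrow> complex) \<Rightarrow> (real \<Rightarrow> complex) \<Rightarrow> bool" where
  "H10 \<phi> \<phi>' \<longleftrightarrow> L2_on {0<..} \<phi> \<and> L2_on {0<..} \<phi>' \<and> \<phi> 0 = 0 \<and>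
     (\<forall>a b. 0 \<le> a \<and> a \<le> b \<longrightarrow> \<phi>' integrable_on {a..b} \<and> \<phi> b - \<phi> a = integral {a..b} \<phi>')"

definition Hm1norm :: "(real \<Rightarrow> complex) \<Rightarrow> real" where
  "Hm1norm F = Sup {cmod (integral {0<..} (\<lambda>r. F r * cnj (\<phi> r))) | \<phi> \<phi>'.
                     H10 \<phi> \<phi>' \<and> H1norm \<phi> \<phi>' \<le> 1}"

definition H2loc :: "(real \<Rightarrow> complex) \<Rightarrow> (real \<Rightarrow> complex) \<Rightarrow> (real \<Rightarrow> complex) \<Rightarrow> bool" where
  "H2loc w w' w'' \<longleftrightarrow> (\<forall>r>0. (w has_vector_derivative w' r) (at r)) \<and>
     (\<forall>a b. 0 < a \<and> a \<le> b \<longrightarrow> L2_on {a..b} w'' \<and> w'' integrable_on {a..b} \<and>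
            w' b - w' a = integral {a..b} w'')"

definition Vk :: "int \<Rightarrow> real \<Rightarrow> real" where
  "Vk k r = (real_of_int k ^ 2 - 1/4) / r\<^sup>2 + r\<^sup>2 / 16 - 1/2"

definition Dk :: "int \<Rightarrow> real \<Rightarrow> (real \<Rightarrow> complex) \<Rightarrow> (real \<Rightarrow> complex) \<Rightarrow> (real \<Rightarrow> complex) \<Rightarrow> bool" where
  "Dk k \<beta> w w' w'' \<longleftrightarrow> H2loc w w' w'' \<and> L2_on {0<..} w \<and>
     L2_on {0<..} (\<lambda>r. - w'' r + of_real (Vk k r) * w r + \<i> * of_real \<beta> * w r / of_real (r\<^sup>2))"

definition Fk :: "int \<Rightarrow> real \<Rightarrow> real \<Rightarrow> (real \<Rightarrow> complex) \<Rightarrow> (real \<Rightarrow> complex) \<Rightarrow> real \<Rightarrow> complex" where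
  "Fk k \<beta> lam w w'' r = - (w'' r - of_real (Vk k r) * w r) + \<i> * of_real \<beta> * of_real (1 / r\<^sup>2 - lam) * w r"

end

theory Submission
  imports Defs
begin

text \<open>
  Write \<open>A w = - w'' + V w + i \<beta> w / r\<^sup>2\<close> with \<open>V = (k\<^sup>2 - 1/4) / r\<^sup>2 + r\<^sup>2 / 16 - 1/2\<close>, so that
  \<open>F = A w - i \<beta> \<lambda> w\<close>. The \<open>\<beta>\<close>-terms are imaginary after pairing with \<open>w\<close>, hence
  \<open>P = Re \<langle>A w, w\<rangle> = Re \<langle>F, w\<rangle>\<close>. For a real multiplier \<open>q\<close>, integration by parts on
  \<open>[a, b] \<subset> (0, \<infinity>)\<close> gives
    \<open>Re \<integral>\<^sub>a\<^sup>b A w w\<^sup>* = \<integral>\<^sub>a\<^sup>b |w' - q w|\<^sup>2 + \<integral>\<^sub>a\<^sup>b (V - q' - q\<^sup>2) |w|\<^sup>2 + [q |w|\<^sup>2 - Re (w' w\<^sup>*)]\<^sub>a\<^sup>b\<close>.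
  With \<open>q = - 1 / (2 r)\<close> this shows \<open>w' + w / (2 r) \<in> L\<^sup>2\<close>, which forces \<open>|w r|\<^sup>2 = o(r)\<close> at \<open>0\<close>;
  together with \<open>w \<in> L\<^sup>2\<close> this makes the boundary terms negligible along suitable \<open>a \<rightarrow> 0\<close>,
  \<open>b \<rightarrow> \<infinity>\<close>. Then \<open>q = 0\<close> gives \<open>\<parallel>w'\<parallel>\<^sup>2 \<le> P + \<parallel>w\<parallel>\<^sup>2 / 2\<close>, and \<open>q = (|k| + 1/2) / r - r / 4\<close>, for
  which \<open>V - q' - q\<^sup>2 = |k| / 2\<close>, gives \<open>|k| \<parallel>w\<parallel>\<^sup>2 / 2 \<le> P\<close>. Both estimates follow from
  \<open>P \<le> L2norm F * L2norm w\<close> and \<open>P \<le> Hm1norm F * H1norm w w'\<close>, the latter because \<open>w\<close>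
  vanishes at \<open>0\<close> and is therefore an admissible test function.
\<close>

section \<open>Integration by parts against an indefinite integral\<close>

lemma constant_on_Icc_if_increments_bounded:
  fixes \<Psi> :: "real \<Rightarrow> 'a::real_normed_vector"
  assumes ab: "a \<le> b" and \<rho>: "continuous_on {a..b} \<rho>"
    and bound: "\<And>x y. a \<le> x \<Longrightarrow> x \<le> y \<Longrightarrow> y \<le> b \<Longrightarrow>
      norm (\<Psi> y - \<Psi> x) \<le> C * (y - x) * (\<rho> y - \<rho> x)"
  shows "\<Psi> b = \<Psi> a"
proof -
  have sym: "norm (\<Psi> y - \<Psi> x) \<le> \<bar>C\<bar> * \<bar>\<rho> y - \<rho> x\<bar> * \<bar>y - x\<bar>"
    if "x \<in> {a..b}" "y \<in> {a..b}" for x y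
  proof -
    have "norm (\<Psi> y - \<Psi> x) \<le> C * (y - x) * (\<rho> y - \<rho> x)"
    proof (cases "x \<le> y")
      case False
      then have "norm (\<Psi> x - \<Psi> y) \<le> C * (x - y) * (\<rho> x - \<rho> y)"
        using bound[of y x] that by auto
      then show ?thesis by (simp add: norm_minus_commute algebra_simps)
    qed (use bound that in auto)
    also have "\<dots> \<le> \<bar>C * (y - x) * (\<rho> y - \<rho> x)\<bar>" by (rule abs_ge_self)
    finally show ?thesis by (simp add: abs_mult ac_simps)
  qed
  have "(\<Psi> has_derivative (\<lambda>h. 0)) (at x within {a..b})" if x: "x \<in> {a..b}" for x
    unfolding has_derivative_within
  proof (intro conjI)
    show "bounded_linear (\<lambda>h::real. 0::'a)" by simp
    have "((\<lambda>y. \<bar>C\<bar> * \<bar>\<rho> y - \<rho> x\<bar>) \<longlongrightarrow> \<bar>C\<bar> * \<bar>\<rho> x - \<rho> x\<bar>) (at x within {a..b})"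
      using \<rho> x by (intro tendsto_intros) (simp add: continuous_on_def)
    then have lim: "((\<lambda>y. \<bar>C\<bar> * \<bar>\<rho> y - \<rho> x\<bar>) \<longlongrightarrow> 0) (at x within {a..b})" by simp
    show "((\<lambda>y. (1 / norm (y - x)) *\<^sub>R (\<Psi> y - (\<Psi> x + 0))) \<longlongrightarrow> 0) (at x within {a..b})"
    proof (rule Lim_null_comparison[OF _ lim])
      show "\<forall>\<^sub>F y in at x within {a..b}.
          norm ((1 / norm (y - x)) *\<^sub>R (\<Psi> y - (\<Psi> x + 0))) \<le> \<bar>C\<bar> * \<bar>\<rho> y - \<rho> x\<bar>"
        unfolding eventually_at_filter
      proof (intro always_eventually allI impI)
        fix y assume y: "y \<noteq> x" "y \<in> {a..b}"
        then show "norm ((1 / norm (y - x)) *\<^sub>R (\<Psi> y - (\<Psi> x + 0))) \<le> \<bar>C\<bar> * \<bar>\<rho> y - \<rho> x\<bar>"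
          using sym[OF x y(2)] by (simp add: divide_simps)
      qed
    qed
  qed
  then obtain c where "\<forall>x\<in>{a..b}. \<Psi> x = c"
    using has_derivative_zero_constant[of "{a..b}" \<Psi>] by auto
  then show ?thesis using ab by auto
qed

lemma product_increment_minus_integral_le:
  fixes W E E' g :: "real \<Rightarrow> complex"
  assumes xy: "x \<le> y"
    and g: "g absolutely_integrable_on {x..y}"
    and W: "\<And>t. t \<in> {x..y} \<Longrightarrow> W y - W t = integral {t..y} g"
    and Wc: "continuous_on {x..y} W"
    and E: "\<And>t. t \<in> {x..y} \<Longrightarrow> (E has_vector_derivative E' t) (at t within {x..y})"
    and E'c: "continuous_on {x..y} E'"
    and M: "\<And>t. t \<in> {x..y} \<Longrightarrow> norm (E' t) \<le> M"
  shows "(\<lambda>t. E' t * W t + E t * g t) integrable_on {x..y}"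
    and "norm ((E y * W y - E x * W x) - integral {x..y} (\<lambda>t. E' t * W t + E t * g t))
           \<le> 2 * M * (y - x) * integral {x..y} (\<lambda>t. norm (g t))"
proof -
  have gsub: "g integrable_on {s..t}" "(\<lambda>x. norm (g x)) integrable_on {s..t}"
    if "x \<le> s" "t \<le> y" for s t
    using g integrable_on_subinterval[of g "{x..y}"]
      integrable_on_subinterval[of "\<lambda>x. norm (g x)" "{x..y}"] that
    by (auto simp: absolutely_integrable_on_def)
  have Ec: "continuous_on {x..y} E"
    using E has_vector_derivative_continuous continuous_on_eq_continuous_within by blast
  have FE: "E t - E x = integral {x..t} E'" if t: "t \<in> {x..y}" for t
  proof -
    have "(E' has_integral E t - E x) {x..t}"
      by (rule fundamental_theorem_of_calculus)
         (use t in \<open>auto intro: has_vector_derivative_within_subset[OF E]\<close>)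
    then show ?thesis by (simp add: integral_unique)
  qed
  have I1: "(\<lambda>t. E' t * W t) integrable_on {x..y}"
    by (intro integrable_continuous_interval continuous_intros E'c Wc)
  have "(\<lambda>t. E t * g t) absolutely_integrable_on {x..y}"
  proof (rule absolutely_integrable_bounded_measurable_product[OF bilinear_times])
    show "E \<in> borel_measurable (lebesgue_on {x..y})"
      by (rule continuous_imp_measurable_on_sets_lebesgue[OF Ec]) auto
    show "bounded (E ` {x..y})"
      by (intro compact_imp_bounded compact_continuous_image Ec compact_Icc)
  qed (use g in auto)
  then have I2: "(\<lambda>t. E t * g t) integrable_on {x..y}"
    by (simp add: absolutely_integrable_on_def)
  show "(\<lambda>t. E' t * W t + E t * g t) integrable_on {x..y}"
    using I1 I2 by (rule integrable_add)
  have i1: "(\<lambda>t. E' t * (W y - W t)) integrable_on {x..y}"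
    by (intro integrable_continuous_interval continuous_intros E'c Wc)
  have i2: "(\<lambda>t. (E x - E t) * g t) integrable_on {x..y}"
  proof -
    have "(\<lambda>t. E x * g t - E t * g t) integrable_on {x..y}"
      using gsub I2 by (intro integrable_diff integrable_on_mult_right) auto
    then show ?thesis by (simp add: algebra_simps)
  qed
  have "(E y * W y - E x * W x) - integral {x..y} (\<lambda>t. E' t * W t + E t * g t)
      = (E y - E x) * W y + E x * (W y - W x)
        - (integral {x..y} (\<lambda>t. E' t * W t) + integral {x..y} (\<lambda>t. E t * g t))"
    using I1 I2 by (simp add: integral_add algebra_simps)
  also have "\<dots> = integral {x..y} (\<lambda>t. E' t * W y - E' t * W t)
      + integral {x..y} (\<lambda>t. E x * g t - E t * g t)"
    using FE[of y] W[of x] xy I1 I2 gsub E'c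
    by (simp add: integral_diff integrable_on_mult_left integrable_on_mult_right
        integrable_continuous_interval)
  finally have eq: "(E y * W y - E x * W x) - integral {x..y} (\<lambda>t. E' t * W t + E t * g t)
      = integral {x..y} (\<lambda>t. E' t * (W y - W t)) + integral {x..y} (\<lambda>t. (E x - E t) * g t)"
    by (simp add: algebra_simps)
  let ?D = "integral {x..y} (\<lambda>t. norm (g t))"
  have "norm (integral {x..y} (\<lambda>t. E' t * (W y - W t))) \<le> integral {x..y} (\<lambda>t. M * ?D)"
  proof (rule integral_norm_bound_integral[OF i1])
    fix t assume t: "t \<in> {x..y}"
    have "norm (W y - W t) \<le> integral {t..y} (\<lambda>t. norm (g t))"
      using W[OF t] gsub t by (auto intro: integral_norm_bound_integral)
    also have "\<dots> \<le> ?D" using t gsub by (intro integral_subset_le) auto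
    finally show "norm (E' t * (W y - W t)) \<le> M * ?D"
      using M[OF t] order_trans[OF norm_ge_zero M[OF t]]
      by (auto simp: norm_mult intro!: mult_mono)
  qed auto
  also have "\<dots> = M * (y - x) * ?D" using xy by simp
  finally have b1: "norm (integral {x..y} (\<lambda>t. E' t * (W y - W t))) \<le> M * (y - x) * ?D" .
  have "norm (integral {x..y} (\<lambda>t. (E x - E t) * g t))
      \<le> integral {x..y} (\<lambda>t. M * (y - x) * norm (g t))"
  proof (rule integral_norm_bound_integral[OF i2])
    fix t assume t: "t \<in> {x..y}"
    have "norm (E x - E t) = norm (integral {x..t} E')"
      using FE[OF t] by (simp add: norm_minus_commute)
    also have "\<dots> \<le> integral {x..t} (\<lambda>_. M)"
      using E'c M t
      by (intro integral_norm_bound_integral integrable_continuous_interval)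
         (auto intro: continuous_on_subset)
    also have "\<dots> \<le> M * (y - x)"
    proof -
      have "0 \<le> M" using M[OF t] norm_ge_zero[of "E' t"] by linarith
      then show ?thesis using t by (simp add: mult.commute mult_left_mono)
    qed
    finally show "norm ((E x - E t) * g t) \<le> M * (y - x) * norm (g t)"
      by (simp add: norm_mult mult_right_mono)
  qed (use gsub in \<open>auto intro: integrable_on_mult_right\<close>)
  also have "\<dots> = M * (y - x) * ?D" by simp
  finally have b2: "norm (integral {x..y} (\<lambda>t. (E x - E t) * g t)) \<le> M * (y - x) * ?D" .
  show "norm ((E y * W y - E x * W x) - integral {x..y} (\<lambda>t. E' t * W t + E t * g t))
           \<le> 2 * M * (y - x) * ?D"
    unfolding eq using norm_triangle_le[OF add_mono[OF b1 b2]] by simp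
qed

lemma integration_by_parts_indefinite_integral:
  fixes W E E' g :: "real \<Rightarrow> complex"
  assumes ab: "a \<le> b"
    and g: "g absolutely_integrable_on {a..b}"
    and W: "\<And>x y. a \<le> x \<Longrightarrow> x \<le> y \<Longrightarrow> y \<le> b \<Longrightarrow> W y - W x = integral {x..y} g"
    and E: "\<And>x. x \<in> {a..b} \<Longrightarrow> (E has_vector_derivative E' x) (at x within {a..b})"
    and E'c: "continuous_on {a..b} E'"
  shows "((\<lambda>x. E' x * W x + E x * g x) has_integral (E b * W b - E a * W a)) {a..b}"
proof -
  define H where "H = (\<lambda>x. E' x * W x + E x * g x)"
  have gi: "g integrable_on {a..b}" and ng: "(\<lambda>x. norm (g x)) integrable_on {a..b}"
    using g by (simp_all add: absolutely_integrable_on_def)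
  have Wc: "continuous_on {a..b} W"
  proof -
    have "continuous_on {a..b} (\<lambda>x. W a + integral {a..x} g)"
      by (intro continuous_on_add continuous_on_const indefinite_integral_continuous_1[OF gi])
    moreover have "W a + integral {a..x} g = W x" if "x \<in> {a..b}" for x
      using W[of a x] that by (metis atLeastAtMost_iff diff_add_cancel order_refl add.commute)
    ultimately show ?thesis using continuous_on_eq by blast
  qed
  obtain M where M: "\<And>x. x \<in> {a..b} \<Longrightarrow> norm (E' x) \<le> M"
    using compact_imp_bounded[OF compact_continuous_image[OF E'c compact_Icc]]
    by (metis bounded_pos imageI)
  have local: "(\<lambda>t. E' t * W t + E t * g t) integrable_on {x..y}"
      "norm ((E y * W y - E x * W x) - integral {x..y} (\<lambda>t. E' t * W t + E t * g t))
         \<le> 2 * M * (y - x) * integral {x..y} (\<lambda>t. norm (g t))"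
    if xy: "a \<le> x" "x \<le> y" "y \<le> b" for x y
  proof -
    have "g absolutely_integrable_on {x..y}"
      by (rule absolutely_integrable_on_subinterval[OF g]) (use xy in auto)
    moreover have "W y - W t = integral {t..y} g" if "t \<in> {x..y}" for t
      using W that xy by auto
    moreover have "continuous_on {x..y} W" "continuous_on {x..y} E'"
      using Wc E'c xy by (auto intro: continuous_on_subset)
    moreover have "(E has_vector_derivative E' t) (at t within {x..y})" if "t \<in> {x..y}" for t
      using that xy by (intro has_vector_derivative_within_subset[OF E]) auto
    moreover have "norm (E' t) \<le> M" if "t \<in> {x..y}" for t
      using M that xy by auto
    ultimately show "(\<lambda>t. E' t * W t + E t * g t) integrable_on {x..y}"
      "norm ((E y * W y - E x * W x) - integral {x..y} (\<lambda>t. E' t * W t + E t * g t))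
         \<le> 2 * M * (y - x) * integral {x..y} (\<lambda>t. norm (g t))"
      using product_increment_minus_integral_le[OF xy(2)] by blast+
  qed
  have HI: "H integrable_on {a..b}" unfolding H_def using local(1)[OF order_refl ab order_refl] .
  define \<rho> where "\<rho> = (\<lambda>x. integral {a..x} (\<lambda>t. norm (g t)))"
  define \<Psi> where "\<Psi> = (\<lambda>x. E x * W x - integral {a..x} H)"
  \<comment> \<open>\<open>\<Psi>\<close> has increments of order \<open>(y - x) (\<rho> y - \<rho> x)\<close>, so it is constant.\<close>
  have "\<Psi> b = \<Psi> a"
  proof (rule constant_on_Icc_if_increments_bounded[OF ab])
    show "continuous_on {a..b} \<rho>"
      unfolding \<rho>_def by (rule indefinite_integral_continuous_1[OF ng])
    fix x y assume xy: "a \<le> x" "x \<le> y" "y \<le> b"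
    have "integral {a..y} H = integral {a..x} H + integral {x..y} H"
      using Henstock_Kurzweil_Integration.integral_combine[of a x y H]
        integrable_on_subinterval[OF HI, of a y] xy by auto
    then have "\<Psi> y - \<Psi> x = (E y * W y - E x * W x) - integral {x..y} H"
      unfolding \<Psi>_def by (simp add: algebra_simps)
    moreover have "\<rho> y - \<rho> x = integral {x..y} (\<lambda>t. norm (g t))"
      unfolding \<rho>_def using Henstock_Kurzweil_Integration.integral_combine[of a x y "\<lambda>t. norm (g t)"]
        integrable_on_subinterval[OF ng, of a y] xy by auto
    ultimately show "norm (\<Psi> y - \<Psi> x) \<le> 2 * M * (y - x) * (\<rho> y - \<rho> x)"
      using local(2)[OF xy] unfolding H_def by simp
  qed
  then have "integral {a..b} H = E b * W b - E a * W a"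
    unfolding \<Psi>_def by (simp add: algebra_simps)
  then show ?thesis using HI unfolding H_def by (simp add: has_integral_integral)
qed

section \<open>Improper integrals on \<open>(0, \<infinity>)\<close>\<close>

lemma eventually_mem_Icc_exhaustion:
  fixes x :: real
  assumes "x > 0"
  shows "eventually (\<lambda>n. x \<in> {inverse (real (Suc n))..real (Suc n)}) sequentially"
proof -
  obtain N1 :: nat where N1: "x < real N1" using reals_Archimedean2 by blast
  obtain N2 :: nat where N2: "inverse x < real N2" using reals_Archimedean2 by blast
  have "x \<in> {inverse (real (Suc n))..real (Suc n)}" if n: "max N1 N2 \<le> n" for n
  proof -
    have "inverse x < real (Suc n)" using N2 n by linarith
    then have "inverse (real (Suc n)) < inverse (inverse x)"
      using assms by (intro less_imp_inverse_less) auto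
    then show ?thesis using N1 n assms by auto
  qed
  then show ?thesis unfolding eventually_sequentially by blast
qed

lemma nonneg_integral_Icc_exhaustion:
  fixes f :: "real \<Rightarrow> real"
  assumes nn: "\<And>x. x > 0 \<Longrightarrow> 0 \<le> f x"
    and li: "\<And>a b. 0 < a \<Longrightarrow> f integrable_on {a..b}"
    and bd: "\<And>n. integral {inverse (real (Suc n))..real (Suc n)} f \<le> M"
  shows "f integrable_on {0<..}"
    and "(\<lambda>n. integral {inverse (real (Suc n))..real (Suc n)} f) \<longlonglongrightarrow> integral {0<..} f"
proof -
  define I where "I n = {inverse (real (Suc n))..real (Suc n)}" for n
  define fn where "fn n x = (if x \<in> I n then f x else 0)" for n x
  have pos: "x > 0" if "x \<in> I n" for x n
    using that less_le_trans[OF positive_imp_inverse_positive[of "real (Suc n)"]]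
    unfolding I_def by auto
  then have sub: "I n \<inter> {0<..} = I n" for n by auto
  have int_n: "fn n integrable_on {0<..}" for n
    unfolding fn_def integrable_restrict_Int sub unfolding I_def by (rule li) simp
  have integral_n: "integral {0<..} (fn n) = integral (I n) f" for n
    unfolding fn_def integral_restrict_Int sub ..
  have "I n \<subseteq> I (Suc n)" for n
  proof -
    have "inverse (real (Suc (Suc n))) \<le> inverse (real (Suc n))"
      by (intro le_imp_inverse_le) auto
    then show ?thesis unfolding I_def by auto
  qed
  then have mono: "fn n x \<le> fn (Suc n) x" if "x \<in> {0<..}" for n x
    using nn[of x] that unfolding fn_def by auto
  have lim: "(\<lambda>n. fn n x) \<longlonglongrightarrow> f x" if "x \<in> {0<..}" for x
  proof (rule tendsto_eventually)
    show "\<forall>\<^sub>F n in sequentially. fn n x = f x"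
      by (rule eventually_mono[OF eventually_mem_Icc_exhaustion[of x]])
         (use that in \<open>auto simp: fn_def I_def\<close>)
  qed
  have bdd: "bounded (range (\<lambda>n. integral {0<..} (fn n)))"
  proof (rule boundedI)
    fix y assume "y \<in> range (\<lambda>n. integral {0<..} (fn n))"
    then obtain n where y: "y = integral (I n) f" using integral_n by auto
    have "0 \<le> integral (I n) f"
      using nn li pos unfolding I_def by (intro integral_nonneg) auto
    then show "norm y \<le> max M 0" using y bd[of n] unfolding I_def by auto
  qed
  from monotone_convergence_increasing[OF int_n mono lim bdd]
  show "f integrable_on {0<..}"
    and "(\<lambda>n. integral {inverse (real (Suc n))..real (Suc n)} f) \<longlonglongrightarrow> integral {0<..} f"
    unfolding integral_n I_def by auto
qed

lemma nonneg_integrable_Ioi_if_Icc_bounded: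
  fixes f :: "real \<Rightarrow> real"
  assumes nn: "\<And>x. x > 0 \<Longrightarrow> 0 \<le> f x"
    and li: "\<And>a b. 0 < a \<Longrightarrow> f integrable_on {a..b}"
    and bd: "\<And>\<epsilon> \<delta> R. \<epsilon> > 0 \<Longrightarrow> \<delta> > 0 \<Longrightarrow>
      \<exists>a b. 0 < a \<and> a < \<delta> \<and> R < b \<and> integral {a..b} f \<le> M + \<epsilon>"
  shows "f integrable_on {0<..}" and "integral {0<..} f \<le> M"
proof -
  have le: "integral {a..b} f \<le> M" if a0: "0 < a" for a b
  proof (rule field_le_epsilon)
    fix \<epsilon> :: real assume e: "0 < \<epsilon>"
    obtain a' b' where ab: "0 < a'" "a' < a" "b < b'" "integral {a'..b'} f \<le> M + \<epsilon>"
      using bd[OF e a0, of b] by auto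
    have "integral {a..b} f \<le> integral {a'..b'} f"
    proof (cases "a \<le> b")
      case True
      then show ?thesis using ab li nn a0 by (intro integral_subset_le) auto
    next
      case False
      have "0 \<le> integral {a'..b'} f" using ab li nn by (intro integral_nonneg) auto
      then show ?thesis using False by simp
    qed
    then show "integral {a..b} f \<le> M + \<epsilon>" using ab by simp
  qed
  show "f integrable_on {0<..}" by (rule nonneg_integral_Icc_exhaustion(1)[OF nn li le]) auto
  have "(\<lambda>n. integral {inverse (real (Suc n))..real (Suc n)} f) \<longlonglongrightarrow> integral {0<..} f"
    by (rule nonneg_integral_Icc_exhaustion(2)[OF nn li le]) auto
  then show "integral {0<..} f \<le> M" by (rule LIMSEQ_le_const2) (auto intro!: le)
qed

lemma integral_Icc_approx_Ioi:
  fixes f :: "real \<Rightarrow> 'b::euclidean_space"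
  assumes f: "f absolutely_integrable_on {0<..}" and e: "\<epsilon> > 0"
  shows "\<exists>\<delta>>0. \<exists>R. \<forall>a b. 0 < a \<and> a < \<delta> \<and> R < b \<longrightarrow>
            norm (integral {a..b} f - integral {0<..} f) < \<epsilon>"
proof -
  define g where "g x = norm (f x)" for x
  have fi: "f integrable_on {0<..}" and gi: "g integrable_on {0<..}"
    using f unfolding g_def by (simp_all add: absolutely_integrable_on_def)
  have gli: "g integrable_on {a..b}" if "0 < a" for a b
    using that by (intro integrable_on_subinterval[OF gi]) auto
  have gnn: "\<And>x. 0 \<le> g x" unfolding g_def by simp
  have pos: "{inverse (real (Suc n))..real (Suc n)} \<subseteq> {0<..}" for n
    using inverse_positive_iff_positive[of "real (Suc n)"]
    by (auto simp del: inverse_positive_iff_positive)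
  have "(\<lambda>n. integral {inverse (real (Suc n))..real (Suc n)} g) \<longlonglongrightarrow> integral {0<..} g"
    using gli gi gnn pos
    by (intro nonneg_integral_Icc_exhaustion(2)[of g "integral {0<..} g"] integral_subset_le) auto
  then obtain N where N: "norm (integral {inverse (real (Suc N))..real (Suc N)} g
                             - integral {0<..} g) < \<epsilon>"
    using e unfolding LIMSEQ_iff by blast
  have "norm (integral {a..b} f - integral {0<..} f) < \<epsilon>"
    if ab: "0 < a" "a < inverse (real (Suc N))" "real (Suc N) < b" for a b
  proof -
    have sub: "{a..b} \<inter> {0<..} = {a..b}" using ab by auto
    define fout where "fout x = (if x \<in> {a..b} then 0 else f x)" for x
    define gout where "gout x = (if x \<in> {a..b} then 0 else g x)" for x
    have fout: "(fout has_integral (integral {0<..} f - integral {a..b} f)) {0<..}"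
    proof -
      have "((\<lambda>x. if x \<in> {a..b} then f x else 0) has_integral integral {a..b} f) {0<..}"
        unfolding has_integral_restrict_Int sub
        using ab by (intro integrable_integral integrable_on_subinterval[OF fi]) auto
      from has_integral_diff[OF integrable_integral[OF fi] this]
      show ?thesis by (rule has_integral_eq[rotated]) (simp add: fout_def)
    qed
    have gout: "(gout has_integral (integral {0<..} g - integral {a..b} g)) {0<..}"
    proof -
      have "((\<lambda>x. if x \<in> {a..b} then g x else 0) has_integral integral {a..b} g) {0<..}"
        unfolding has_integral_restrict_Int sub using ab gli by (intro integrable_integral) auto
      from has_integral_diff[OF integrable_integral[OF gi] this]
      show ?thesis by (rule has_integral_eq[rotated]) (simp add: gout_def)
    qed
    have "norm (integral {a..b} f - integral {0<..} f) = norm (integral {0<..} fout)"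
      using fout by (simp add: integral_unique norm_minus_commute)
    also have "\<dots> \<le> integral {0<..} gout"
      using fout gout by (intro integral_norm_bound_integral) (auto simp: fout_def gout_def g_def)
    also have "\<dots> \<le> integral {0<..} g - integral {inverse (real (Suc N))..real (Suc N)} g"
      using gout ab gli[OF ab(1)] gli[of "inverse (real (Suc N))" "real (Suc N)"] gnn
      by (simp add: integral_unique integral_subset_le)
    also have "\<dots> < \<epsilon>" using N by auto
    finally show ?thesis .
  qed
  then show ?thesis by (intro exI[of _ "inverse (real (Suc N))"] exI[of _ "real (Suc N)"]) auto
qed

lemma integral_Ioi_ge_ln_if_ge_inverse:
  fixes f :: "real \<Rightarrow> real"
  assumes f: "f integrable_on {0<..}" and nn: "\<And>x. x > 0 \<Longrightarrow> 0 \<le> f x"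
    and td: "0 < t" "t \<le> d" and low: "\<And>x. t \<le> x \<Longrightarrow> x \<le> d \<Longrightarrow> c / x \<le> f x"
  shows "c * (ln d - ln t) \<le> integral {0<..} f"
proof -
  have hi: "((\<lambda>x. c / x) has_integral (c * ln d - c * ln t)) {t..d}"
  proof (rule fundamental_theorem_of_calculus[OF td(2)])
    fix x assume "x \<in> {t..d}"
    then have "x > 0" using td by auto
    then show "((\<lambda>x. c * ln x) has_vector_derivative c / x) (at x within {t..d})"
      by (auto intro!: derivative_eq_intros
               simp: has_real_derivative_iff_has_vector_derivative[symmetric] field_simps)
  qed
  have fi: "f integrable_on {t..d}"
    using f td by (intro integrable_on_subinterval[OF f]) auto
  have "c * (ln d - ln t) = integral {t..d} (\<lambda>x. c / x)"
    using hi by (simp add: integral_unique algebra_simps)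
  also have "\<dots> \<le> integral {t..d} f"
    using hi fi low by (intro integral_le) (auto simp: has_integral_integrable)
  also have "\<dots> \<le> integral {0<..} f"
    using fi f nn td by (intro integral_subset_le) auto
  finally show ?thesis .
qed

text \<open>A nonnegative integrable function on \<open>(0, \<infinity>)\<close> cannot stay above \<open>\<epsilon> / x\<close> near \<open>0\<close> or
  near \<open>\<infinity>\<close>, since \<open>1 / x\<close> is not integrable there.\<close>

lemma exists_mult_less_near_0:
  fixes f :: "real \<Rightarrow> real"
  assumes f: "f integrable_on {0<..}" and nn: "\<And>x. x > 0 \<Longrightarrow> 0 \<le> f x"
    and e: "\<epsilon> > 0" and d: "\<delta> > 0"
  shows "\<exists>a. 0 < a \<and> a < \<delta> \<and> a * f a < \<epsilon>"
proof (rule ccontr)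
  assume neg: "\<not> ?thesis"
  have low: "\<epsilon> / x \<le> f x" if "0 < x" "x < \<delta>" for x
  proof -
    have "\<epsilon> \<le> x * f x" using neg that by (meson not_less)
    then show ?thesis using that by (simp add: pos_divide_le_eq mult.commute)
  qed
  define I where "I = integral {0<..} f"
  have I0: "0 \<le> I / \<epsilon>" unfolding I_def using f nn e by (intro divide_nonneg_pos integral_nonneg) auto
  define s where "s = \<delta> / 2"
  define t where "t = s * exp (- (I / \<epsilon> + 1))"
  have s: "0 < s" "s < \<delta>" unfolding s_def using d by auto
  have "t \<le> s * 1" unfolding t_def using s I0 by (intro mult_left_mono) auto
  then have t: "0 < t" "t \<le> s" unfolding t_def using s by auto
  have "\<epsilon> * (ln s - ln t) \<le> I"
    unfolding I_def by (rule integral_Ioi_ge_ln_if_ge_inverse[OF f nn t]) (use low s t in auto)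
  moreover have "ln s - ln t = I / \<epsilon> + 1"
    unfolding t_def using s by (simp add: ln_mult)
  ultimately show False using e by (simp add: distrib_left)
qed

lemma exists_mult_less_near_top:
  fixes f :: "real \<Rightarrow> real"
  assumes f: "f integrable_on {0<..}" and nn: "\<And>x. x > 0 \<Longrightarrow> 0 \<le> f x"
    and e: "\<epsilon> > 0"
  shows "\<exists>b. R < b \<and> b * f b < \<epsilon>"
proof (rule ccontr)
  assume neg: "\<not> ?thesis"
  have low: "\<epsilon> / x \<le> f x" if "R < x" "0 < x" for x
  proof -
    have "\<epsilon> \<le> x * f x" using neg that by (meson not_less)
    then show ?thesis using that by (simp add: pos_divide_le_eq mult.commute)
  qed
  define I where "I = integral {0<..} f"
  have I0: "0 \<le> I / \<epsilon>" unfolding I_def using f nn e by (intro divide_nonneg_pos integral_nonneg) auto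
  define t where "t = max R 0 + 1"
  define d where "d = t * exp (I / \<epsilon> + 1)"
  have t0: "0 < t" unfolding t_def by auto
  have "t * 1 \<le> d" unfolding d_def using t0 I0 by (intro mult_left_mono) auto
  then have t: "0 < t" "t \<le> d" using t0 by auto
  have "\<epsilon> * (ln d - ln t) \<le> I"
    unfolding I_def by (rule integral_Ioi_ge_ln_if_ge_inverse[OF f nn t]) (use low t in \<open>auto simp: t_def\<close>)
  moreover have "ln d - ln t = I / \<epsilon> + 1"
    unfolding d_def using t by (simp add: ln_mult)
  ultimately show False using e by (simp add: distrib_left)
qed

lemma exists_deriv_ge_near_0:
  fixes \<phi> \<phi>' :: "real \<Rightarrow> real"
  assumes deriv: "\<And>x. 0 < x \<Longrightarrow> x < \<delta> \<Longrightarrow> (\<phi> has_real_derivative \<phi>' x) (at x)"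
    and nonneg: "\<And>x. 0 < x \<Longrightarrow> 0 \<le> \<phi> x"
    and small: "\<And>\<eta> d. 0 < \<eta> \<Longrightarrow> 0 < d \<Longrightarrow> \<exists>t. 0 < t \<and> t < d \<and> \<phi> t < \<eta>"
    and e: "0 < \<epsilon>" and d: "0 < \<delta>"
  shows "\<exists>a. 0 < a \<and> a < \<delta> \<and> - \<epsilon> * a \<le> \<phi>' a"
proof (rule ccontr)
  assume "\<not> ?thesis"
  then have slope: "\<phi>' x < - \<epsilon> * x" if "0 < x" "x < \<delta>" for x
    using that by force
  define s where "s = \<delta> / 2"
  have decr: "\<phi> s + \<epsilon> * s\<^sup>2 / 2 \<le> \<phi> t + \<epsilon> * t\<^sup>2 / 2" if t: "0 < t" "t \<le> s" for t
  proof (rule DERIV_nonpos_imp_nonincreasing[OF t(2)])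
    fix x assume x: "t \<le> x" "x \<le> s"
    then have "0 < x" "x < \<delta>" using t d unfolding s_def by auto
    then have "((\<lambda>x. \<phi> x + \<epsilon> * x\<^sup>2 / 2) has_real_derivative \<phi>' x + \<epsilon> * x) (at x)"
      by (auto intro!: derivative_eq_intros deriv)
    then show "\<exists>y. ((\<lambda>x. \<phi> x + \<epsilon> * x\<^sup>2 / 2) has_real_derivative y) (at x) \<and> y \<le> 0"
      using slope[of x] \<open>0 < x\<close> \<open>x < \<delta>\<close> by force
  qed
  define c where "c = 3 * \<epsilon> * \<delta>\<^sup>2 / 32"
  have "c > 0" unfolding c_def using e d by simp
  then obtain t where t: "0 < t" "t < \<delta> / 4" "\<phi> t < c"
    using small[of c "\<delta> / 4"] d by auto
  have "\<epsilon> * t\<^sup>2 \<le> \<epsilon> * (\<delta> / 4)\<^sup>2"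
    using t e by (intro mult_left_mono power_mono) auto
  moreover have "\<epsilon> * s\<^sup>2 / 2 - \<epsilon> * (\<delta> / 4)\<^sup>2 / 2 = c"
    unfolding s_def c_def by (simp add: power2_eq_square field_simps)
  ultimately show False
    using decr[of t] nonneg[of s] t d unfolding s_def by auto
qed

lemma exists_deriv_le_near_top:
  fixes \<phi> \<phi>' :: "real \<Rightarrow> real"
  assumes deriv: "\<And>x. 0 < x \<Longrightarrow> (\<phi> has_real_derivative \<phi>' x) (at x)"
    and nonneg: "\<And>x. 0 < x \<Longrightarrow> 0 \<le> \<phi> x"
    and small: "\<And>R. \<exists>b. R < b \<and> \<phi> b < 1"
    and e: "0 < \<epsilon>"
  shows "\<exists>b. R < b \<and> \<phi>' b \<le> \<epsilon>"
proof (rule ccontr)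
  assume "\<not> ?thesis"
  then have slope: "\<epsilon> < \<phi>' x" if "R < x" for x
    using that by force
  define s where "s = max R 0 + 1"
  have s: "0 < s" "R < s" unfolding s_def by auto
  have incr: "\<phi> s + \<epsilon> * (x - s) \<le> \<phi> x" if x: "s \<le> x" for x
  proof -
    have "\<phi> s - \<epsilon> * s \<le> \<phi> x - \<epsilon> * x"
    proof (rule DERIV_nonneg_imp_nondecreasing[OF x])
      fix y assume y: "s \<le> y" "y \<le> x"
      then have "0 < y" "R < y" using s by auto
      then have "((\<lambda>x. \<phi> x - \<epsilon> * x) has_real_derivative \<phi>' y - \<epsilon>) (at y)"
        by (auto intro!: derivative_eq_intros deriv)
      then show "\<exists>z. ((\<lambda>x. \<phi> x - \<epsilon> * x) has_real_derivative z) (at y) \<and> 0 \<le> z"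
        using slope[of y] \<open>R < y\<close> by force
    qed
    then show ?thesis by (simp add: algebra_simps)
  qed
  obtain b where b: "s + 1 / \<epsilon> < b" "\<phi> b < 1" using small by blast
  have "1 < \<epsilon> * (b - s)" using b e by (simp add: field_simps)
  moreover have "0 < 1 / \<epsilon>" using e by simp
  then have "s \<le> b" using b(1) by linarith
  ultimately show False using incr[of b] nonneg[of s] b(2) s(1) by linarith
qed

lemma norm_diff_of_real_mult_square:
  fixes z u :: complex and t :: real
  shows "(cmod (z - of_real t * u))\<^sup>2 = (cmod z)\<^sup>2 - t * (2 * Re (z * cnj u)) + t\<^sup>2 * (cmod u)\<^sup>2"
  unfolding cmod_power2 by (simp add: power2_eq_square algebra_simps)

lemma le_sqrt_mult_if_le_weighted_means:
  fixes A B I :: real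
  assumes A: "A \<ge> 0" and B: "B \<ge> 0" and H: "\<And>t. t > 0 \<Longrightarrow> I \<le> (t * A + B / t) / 2"
  shows "I \<le> sqrt A * sqrt B"
proof (cases "A > 0 \<and> B > 0")
  case True
  define a where "a = sqrt A"
  define b where "b = sqrt B"
  have a: "a > 0" "A = a * a" and b: "b > 0" "B = b * b"
    using True unfolding a_def b_def by auto
  have "b / a > 0" "b / a * A = a * b" "B / (b / a) = a * b"
    using a b by (simp_all add: field_simps)
  then show ?thesis using H[of "b / a"] unfolding a_def b_def by simp
next
  case False
  then have z: "A = 0 \<or> B = 0" using A B by auto
  have "I \<le> 0"
  proof (rule ccontr)
    assume "\<not> I \<le> 0"
    then have I: "I > 0" by simp
    define t where "t = (if A = 0 then (B + 1) / I else I / (A + 1))"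
    have t: "t > 0" using I A B unfolding t_def by simp
    have "t * A + B / t \<le> I"
    proof (cases "A = 0")
      case True
      have "B * I \<le> I * (B + 1)" using I by (simp add: algebra_simps)
      then show ?thesis using True I B by (simp add: t_def pos_divide_le_eq)
    next
      case False
      have "I * A \<le> I * (A + 1)" using I by (simp add: algebra_simps)
      then show ?thesis using False z I A by (simp add: t_def pos_divide_le_eq)
    qed
    then show False using H[OF t] I by simp
  qed
  then show ?thesis using z by auto
qed

lemma multiplier_estimates_imp_bound_by_L2_pairing:
  fixes H D P N K :: real
  assumes H: "H \<ge> 0" and D: "D \<ge> 0" and K: "K \<ge> 1"
    and hD: "D \<le> P + 1/2 * H" and hK: "K / 2 * H \<le> P"
    and N: "N \<ge> 0" and hP: "P \<le> N * sqrt H"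
  shows "sqrt K * sqrt (H + D) + K * sqrt H \<le> 7 * N"
proof -
  define x where "x = sqrt H"
  have x0: "x \<ge> 0" unfolding x_def using H by simp
  have xx: "x * x = H" unfolding x_def using H by simp
  have Kx: "K * x \<le> 2 * N"
  proof (cases "x = 0")
    case True then show ?thesis using N by simp
  next
    case False
    then have xp: "x > 0" using x0 by simp
    have "x * (K * x) \<le> x * (2 * N)"
      using hK hP xx unfolding x_def[symmetric] by (simp add: algebra_simps)
    then show ?thesis using xp by (simp add: mult_le_cancel_left_pos)
  qed
  have "1 * x \<le> K * x" using K x0 by (intro mult_right_mono) auto
  then have x2: "x \<le> 2 * N" using Kx by simp
  have a1: "K * H \<le> 4 * N\<^sup>2"
  proof -
    have "K * H = x * (K * x)" using xx by (simp add: algebra_simps)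
    also have "\<dots> \<le> x * (2 * N)" using Kx x0 by (intro mult_left_mono) auto
    also have "\<dots> \<le> (2 * N) * (2 * N)" using x2 N by (intro mult_right_mono) auto
    finally show ?thesis by (simp add: power2_eq_square)
  qed
  have a2: "K * D \<le> 4 * N\<^sup>2"
  proof -
    have "K * D \<le> K * (N * x + 1/2 * H)"
      using hD hP K unfolding x_def[symmetric] by (intro mult_left_mono) auto
    also have "\<dots> = N * (K * x) + 1/2 * (K * H)" by (simp add: algebra_simps)
    also have "\<dots> \<le> N * (2 * N) + 1/2 * (4 * N\<^sup>2)"
      using Kx a1 N by (intro add_mono mult_left_mono) auto
    also have "\<dots> = 4 * N\<^sup>2" by (simp add: power2_eq_square)
    finally show ?thesis .
  qed
  have "sqrt K * sqrt (H + D) = sqrt (K * (H + D))" by (simp add: real_sqrt_mult)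
  also have "\<dots> \<le> sqrt ((3 * N)\<^sup>2)"
  proof (rule real_sqrt_le_mono)
    have n2: "0 \<le> N\<^sup>2" by simp
    have e9: "(3 * N)\<^sup>2 = 9 * N\<^sup>2" by (simp add: power_mult_distrib)
    have "K * (H + D) = K * H + K * D" by (simp add: algebra_simps)
    then show "K * (H + D) \<le> (3 * N)\<^sup>2" using a1 a2 n2 e9 by linarith
  qed
  also have "\<dots> = 3 * N" using N by (subst real_sqrt_abs) simp
  finally have b1: "sqrt K * sqrt (H + D) \<le> 3 * N" .
  have b2: "K * sqrt H \<le> 2 * N" using Kx unfolding x_def .
  show ?thesis using b1 b2 N by linarith
qed

lemma multiplier_estimates_imp_bound_by_H1_pairing:
  fixes H D P N K :: real
  assumes H: "H \<ge> 0" and D: "D \<ge> 0" and K: "K \<ge> 1"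
    and hD: "D \<le> P + 1/2 * H" and hK: "K / 2 * H \<le> P"
    and N: "N \<ge> 0" and hP: "P \<le> N * sqrt (H + D)"
  shows "sqrt (H + D) + sqrt K * sqrt H \<le> 7 * N"
proof -
  define y where "y = sqrt (H + D)"
  have y0: "y \<ge> 0" unfolding y_def using H D by simp
  have yy: "y * y = H + D" unfolding y_def using H D by simp
  have KH: "K * H \<le> 2 * P" using hK by simp
  have "1 * H \<le> K * H" using H K by (intro mult_right_mono) auto
  then have HKH: "H \<le> K * H" by simp
  have "y * y \<le> 4 * P" using yy hD KH HKH by linarith
  also have "\<dots> \<le> y * (4 * N)" using hP unfolding y_def[symmetric] by (simp add: algebra_simps)
  finally have yyN: "y * y \<le> y * (4 * N)" .
  have y4: "y \<le> 4 * N"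
  proof (cases "y = 0")
    case True then show ?thesis using N by simp
  next
    case False then have "y > 0" using y0 by simp
    then show ?thesis using yyN by (simp add: mult_le_cancel_left_pos)
  qed
  have "K * H \<le> 2 * (N * y)" using KH hP unfolding y_def[symmetric] by linarith
  also have "\<dots> \<le> 2 * (N * (4 * N))" using y4 N by (intro mult_left_mono) auto
  also have "\<dots> \<le> (3 * N)\<^sup>2" by (simp add: power2_eq_square)
  finally have "K * H \<le> (3 * N)\<^sup>2" .
  then have "sqrt (K * H) \<le> sqrt ((3 * N)\<^sup>2)" by (rule real_sqrt_le_mono)
  moreover have "sqrt ((3 * N)\<^sup>2) = 3 * N" using N by (subst real_sqrt_abs) simp
  ultimately have "sqrt K * sqrt H \<le> 3 * N" by (simp add: real_sqrt_mult)
  then show ?thesis using y4 unfolding y_def by linarith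
qed

section \<open>The norms of \<open>L\<^sup>2\<close>, \<open>H\<^sup>1\<close> and \<open>H\<^sup>-\<^sup>1\<close>\<close>

lemma borel_measurable_cnj [measurable]:
  fixes g :: "'a \<Rightarrow> complex"
  assumes "g \<in> borel_measurable M"
  shows "(\<lambda>x. cnj (g x)) \<in> borel_measurable M"
  using borel_measurable_continuous_on[OF continuous_on_cnj[OF continuous_on_id] assms] by simp

lemma Re_integral:
  fixes f :: "real \<Rightarrow> complex"
  assumes "f integrable_on S"
  shows "Re (integral S f) = integral S (\<lambda>x. Re (f x))"
  using integral_unique[OF has_integral_Re[OF integrable_integral[OF assms]]] by simp

lemma L2_on_borel_measurable:
  assumes "L2_on S f" "S \<in> sets lebesgue"
  shows "f \<in> borel_measurable (lebesgue_on S)"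
  using assms by (simp add: L2_on_def measurable_on_iff_borel_measurable)

lemma L2_on_mult:
  fixes f :: "real \<Rightarrow> complex"
  assumes "L2_on S f"
  shows "L2_on S (\<lambda>r. c * f r)"
proof -
  have "((\<lambda>z. c * z) \<circ> f) measurable_on S"
    using assms unfolding L2_on_def
    by (intro measurable_on_compose_continuous_0) (auto intro: continuous_intros)
  then show ?thesis using assms unfolding L2_on_def
    by (auto simp: o_def norm_mult power_mult_distrib intro: integrable_on_mult_right)
qed

lemma L2_on_diff_mult:
  fixes f g :: "real \<Rightarrow> complex"
  assumes f: "L2_on S f" and g: "L2_on S g" and S: "S \<in> sets lebesgue"
  shows "L2_on S (\<lambda>r. f r - c * g r)"
proof -
  have [measurable]: "f \<in> borel_measurable (lebesgue_on S)" "g \<in> borel_measurable (lebesgue_on S)"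
    using L2_on_borel_measurable f g S by auto
  have m: "(\<lambda>r. f r - c * g r) \<in> borel_measurable (lebesgue_on S)" by measurable
  have dom: "(\<lambda>x. 2 * (cmod (f x))\<^sup>2 + 2 * (cmod c)\<^sup>2 * (cmod (g x))\<^sup>2) integrable_on S"
    using f g unfolding L2_on_def by (intro integrable_add integrable_on_mult_right) auto
  have pb: "(cmod (f x - c * g x))\<^sup>2 \<le> 2 * (cmod (f x))\<^sup>2 + 2 * (cmod c)\<^sup>2 * (cmod (g x))\<^sup>2" for x
  proof -
    have "cmod (f x - c * g x) \<le> cmod (f x) + cmod c * cmod (g x)"
      using norm_triangle_ineq4[of "f x" "c * g x"] by (simp add: norm_mult)
    then have "(cmod (f x - c * g x))\<^sup>2 \<le> (cmod (f x) + cmod c * cmod (g x))\<^sup>2"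
      by (intro power_mono) auto
    also have "\<dots> \<le> 2 * (cmod (f x))\<^sup>2 + 2 * (cmod c)\<^sup>2 * (cmod (g x))\<^sup>2"
      using sum_squares_bound[of "cmod (f x)" "cmod c * cmod (g x)"]
      by (simp add: power2_eq_square algebra_simps)
    finally show ?thesis .
  qed
  have "(\<lambda>r. (cmod (f r - c * g r))\<^sup>2) integrable_on S"
    by (rule measurable_bounded_by_integrable_imp_integrable[OF _ dom _ S]) (use m pb in auto)
  then show ?thesis unfolding L2_on_def using m S by (simp add: measurable_on_iff_borel_measurable)
qed

lemma L2_on_mult_cnj_absolutely_integrable:
  fixes f g :: "real \<Rightarrow> complex"
  assumes f: "L2_on S f" and g: "L2_on S g" and S: "S \<in> sets lebesgue"
  shows "(\<lambda>x. f x * cnj (g x)) absolutely_integrable_on S"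
proof (rule measurable_bounded_by_integrable_imp_absolutely_integrable[OF _ S])
  have [measurable]: "f \<in> borel_measurable (lebesgue_on S)" "g \<in> borel_measurable (lebesgue_on S)"
    using L2_on_borel_measurable f g S by auto
  show "(\<lambda>x. f x * cnj (g x)) \<in> borel_measurable (lebesgue_on S)" by measurable
  show "(\<lambda>x. ((cmod (f x))\<^sup>2 + (cmod (g x))\<^sup>2) / 2) integrable_on S"
    using f g unfolding L2_on_def by (intro integrable_on_divide integrable_add) auto
  show "norm (f x * cnj (g x)) \<le> ((cmod (f x))\<^sup>2 + (cmod (g x))\<^sup>2) / 2" for x
    using sum_squares_bound[of "cmod (f x)" "cmod (g x)"] by (simp add: norm_mult power2_eq_square)
qed

lemma L2_on_Cauchy_Schwarz:
  fixes f g :: "real \<Rightarrow> complex"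
  assumes f: "L2_on S f" and g: "L2_on S g" and S: "S \<in> sets lebesgue"
  shows "cmod (integral S (\<lambda>x. f x * cnj (g x)))
           \<le> sqrt (integral S (\<lambda>x. (cmod (f x))\<^sup>2)) * sqrt (integral S (\<lambda>x. (cmod (g x))\<^sup>2))"
proof -
  have fg: "(\<lambda>x. f x * cnj (g x)) absolutely_integrable_on S"
    by (rule L2_on_mult_cnj_absolutely_integrable[OF f g S])
  have f2: "(\<lambda>x. (cmod (f x))\<^sup>2) integrable_on S" and g2: "(\<lambda>x. (cmod (g x))\<^sup>2) integrable_on S"
    using f g by (auto simp: L2_on_def)
  have "cmod (integral S (\<lambda>x. f x * cnj (g x))) \<le> integral S (\<lambda>x. cmod (f x) * cmod (g x))"
    using fg by (intro integral_norm_bound_integral) (auto simp: absolutely_integrable_on_def norm_mult)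
  also have "\<dots> \<le> sqrt (integral S (\<lambda>x. (cmod (f x))\<^sup>2)) * sqrt (integral S (\<lambda>x. (cmod (g x))\<^sup>2))"
  proof (rule le_sqrt_mult_if_le_weighted_means)
    show "0 \<le> integral S (\<lambda>x. (cmod (f x))\<^sup>2)" "0 \<le> integral S (\<lambda>x. (cmod (g x))\<^sup>2)"
      using f2 g2 by (auto intro: integral_nonneg)
    fix t :: real assume t: "t > 0"
    have pt: "cmod (f x) * cmod (g x) \<le> (t * (cmod (f x))\<^sup>2 + (cmod (g x))\<^sup>2 / t) / 2" for x
    proof -
      have "0 \<le> (t * cmod (f x) - cmod (g x))\<^sup>2" by simp
      then show ?thesis using t by (simp add: field_simps power2_eq_square)
    qed
    have "integral S (\<lambda>x. cmod (f x) * cmod (g x))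
        \<le> integral S (\<lambda>x. (t * (cmod (f x))\<^sup>2 + (cmod (g x))\<^sup>2 / t) / 2)"
      using fg f2 g2 pt
      by (intro integral_le)
         (auto simp: absolutely_integrable_on_def norm_mult
               intro!: integrable_on_divide integrable_add integrable_on_mult_right)
    also have "\<dots> = (t * integral S (\<lambda>x. (cmod (f x))\<^sup>2) + integral S (\<lambda>x. (cmod (g x))\<^sup>2) / t) / 2"
      using f2 g2 by (simp add: integral_add integrable_on_divide integrable_on_mult_right)
    finally show "integral S (\<lambda>x. cmod (f x) * cmod (g x))
        \<le> (t * integral S (\<lambda>x. (cmod (f x))\<^sup>2) + integral S (\<lambda>x. (cmod (g x))\<^sup>2) / t) / 2" .
  qed
  finally show ?thesis .
qed

lemma L2norm_nonneg: "0 \<le> L2norm f"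
proof -
  have "0 \<le> integral {0<..} (\<lambda>r. (cmod (f r))\<^sup>2)"
    by (cases "(\<lambda>r. (cmod (f r))\<^sup>2) integrable_on {0<..}")
       (auto intro: integral_nonneg simp: not_integrable_integral)
  then show ?thesis unfolding L2norm_def by simp
qed

lemma L2norm_le_H1norm: "L2norm f \<le> H1norm f f'"
  unfolding H1norm_def using L2norm_nonneg[of f] real_sqrt_le_mono[of "(L2norm f)\<^sup>2"] by simp

lemma L2norm_mult: "L2norm (\<lambda>r. c * f r) = cmod c * L2norm f"
  unfolding L2norm_def by (simp add: norm_mult power_mult_distrib real_sqrt_mult)

lemma H1norm_mult: "H1norm (\<lambda>r. c * f r) (\<lambda>r. c * f' r) = cmod c * H1norm f f'"
  unfolding H1norm_def L2norm_mult
  by (simp add: power_mult_distrib real_sqrt_mult flip: distrib_left)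

lemma H10_mult:
  assumes "H10 \<phi> \<phi>'"
  shows "H10 (\<lambda>r. c * \<phi> r) (\<lambda>r. c * \<phi>' r)"
  using assms unfolding H10_def
  by (auto simp: L2_on_mult integrable_on_mult_right simp flip: right_diff_distrib)

lemma L2norm_pairing_le:
  assumes F: "L2_on {0<..} F" and \<psi>: "L2_on {0<..} \<psi>"
  shows "cmod (integral {0<..} (\<lambda>r. F r * cnj (\<psi> r))) \<le> L2norm F * L2norm \<psi>"
  unfolding L2norm_def by (rule L2_on_Cauchy_Schwarz[OF F \<psi>]) simp

lemma Hm1norm_pairing_le:
  assumes F: "L2_on {0<..} F" and \<phi>: "H10 \<phi> \<phi>'" and n: "H1norm \<phi> \<phi>' \<le> 1"
  shows "cmod (integral {0<..} (\<lambda>r. F r * cnj (\<phi> r))) \<le> Hm1norm F"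
  unfolding Hm1norm_def
proof (rule cSup_upper)
  show "cmod (integral {0<..} (\<lambda>r. F r * cnj (\<phi> r))) \<in> {cmod (integral {0<..} (\<lambda>r. F r * cnj (\<phi> r)))
         | \<phi> \<phi>'. H10 \<phi> \<phi>' \<and> H1norm \<phi> \<phi>' \<le> 1}"
    using \<phi> n by blast
  have "cmod (integral {0<..} (\<lambda>r. F r * cnj (\<psi> r))) \<le> L2norm F"
    if "H10 \<psi> \<psi>'" "H1norm \<psi> \<psi>' \<le> 1" for \<psi> \<psi>'
  proof -
    have "cmod (integral {0<..} (\<lambda>r. F r * cnj (\<psi> r))) \<le> L2norm F * L2norm \<psi>"
      using that F by (intro L2norm_pairing_le) (auto simp: H10_def)
    also have "\<dots> \<le> L2norm F * 1"
      using L2norm_le_H1norm[of \<psi> \<psi>'] that L2norm_nonneg[of F] by (intro mult_left_mono) auto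
    finally show ?thesis by simp
  qed
  then show "bdd_above {cmod (integral {0<..} (\<lambda>r. F r * cnj (\<phi> r)))
         | \<phi> \<phi>'. H10 \<phi> \<phi>' \<and> H1norm \<phi> \<phi>' \<le> 1}"
    by (intro bdd_aboveI[of _ "L2norm F"]) blast
qed

lemma Hm1norm_nonneg:
  assumes "L2_on {0<..} F"
  shows "0 \<le> Hm1norm F"
proof -
  have "H10 (\<lambda>r. 0) (\<lambda>r. 0)" by (simp add: H10_def L2_on_def integrable_0)
  moreover have "H1norm (\<lambda>r. 0) (\<lambda>r. 0) \<le> 1" by (simp add: H1norm_def L2norm_def)
  ultimately show ?thesis using Hm1norm_pairing_le[OF assms] by fastforce
qed

lemma Hm1norm_pairing_le_mult_H1norm:
  assumes F: "L2_on {0<..} F" and \<phi>: "H10 \<phi> \<phi>'"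
  shows "cmod (integral {0<..} (\<lambda>r. F r * cnj (\<phi> r))) \<le> Hm1norm F * H1norm \<phi> \<phi>'"
proof -
  let ?I = "cmod (integral {0<..} (\<lambda>r. F r * cnj (\<phi> r)))"
  have bound: "?I \<le> Hm1norm F * t" if t: "H1norm \<phi> \<phi>' < t" for t
  proof -
    have "0 \<le> H1norm \<phi> \<phi>'" unfolding H1norm_def by simp
    then have t0: "t > 0" using t by linarith
    have "H1norm (\<lambda>r. of_real (1 / t) * \<phi> r) (\<lambda>r. of_real (1 / t) * \<phi>' r) \<le> 1"
      unfolding H1norm_mult using t t0 by (simp add: norm_divide)
    then have "cmod (integral {0<..} (\<lambda>r. F r * cnj (of_real (1 / t) * \<phi> r))) \<le> Hm1norm F"
      by (rule Hm1norm_pairing_le[OF F H10_mult[OF \<phi>]])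
    then show ?thesis using t0 by (simp add: norm_divide pos_divide_le_eq mult.commute)
  qed
  have "((\<lambda>t. Hm1norm F * t) \<longlongrightarrow> Hm1norm F * H1norm \<phi> \<phi>') (at_right (H1norm \<phi> \<phi>'))"
    by (intro tendsto_intros)
  then show ?thesis
    by (rule tendsto_le[OF trivial_limit_at_right_real _ tendsto_const])
       (rule eventually_mono[OF eventually_at_right_less bound])
qed

section \<open>Multiplier estimates on \<open>D\<^sub>k\<close>\<close>

locale Dk_function =
  fixes k :: int and \<beta> :: real and w w' w'' :: "real \<Rightarrow> complex"
  assumes abs_k_ge_1: "1 \<le> \<bar>k\<bar>" and in_Dk: "Dk k \<beta> w w' w''"
begin

definition Aw :: "real \<Rightarrow> complex" where
  "Aw r = - w'' r + of_real (Vk k r) * w r + \<i> * of_real \<beta> * w r / of_real (r\<^sup>2)"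

definition wsq :: "real \<Rightarrow> real" where
  "wsq r = (cmod (w r))\<^sup>2"

definition wsq' :: "real \<Rightarrow> real" where
  "wsq' r = 2 * Re (w' r * cnj (w r))"

definition pairing :: real where
  "pairing = Re (integral {0<..} (\<lambda>r. Aw r * cnj (w r)))"

lemma w_has_vector_derivative: "0 < r \<Longrightarrow> (w has_vector_derivative w' r) (at r)"
  using in_Dk by (simp add: Dk_def H2loc_def)

lemma w''_L2_on_Icc: "0 < a \<Longrightarrow> a \<le> b \<Longrightarrow> L2_on {a..b} w''"
  using in_Dk by (simp add: Dk_def H2loc_def)

lemma w''_integrable_on_Icc: "0 < a \<Longrightarrow> a \<le> b \<Longrightarrow> w'' integrable_on {a..b}"
  using in_Dk by (simp add: Dk_def H2loc_def)

lemma w'_diff_eq_integral: "0 < a \<Longrightarrow> a \<le> b \<Longrightarrow> w' b - w' a = integral {a..b} w''"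
  using in_Dk by (simp add: Dk_def H2loc_def)

lemma w_L2_on: "L2_on {0<..} w"
  using in_Dk by (simp add: Dk_def)

lemma Aw_L2_on: "L2_on {0<..} Aw"
  using in_Dk by (simp add: Dk_def Aw_def[abs_def])

lemma abs_k_squared_ge_1: "1 \<le> (real_of_int k)\<^sup>2"
proof -
  have "1 \<le> \<bar>real_of_int k\<bar>" using abs_k_ge_1 by linarith
  then have "1 * 1 \<le> \<bar>real_of_int k\<bar> * \<bar>real_of_int k\<bar>" by (intro mult_mono) auto
  then show ?thesis by (simp add: power2_eq_square)
qed

lemma Vk_ge: "0 < r \<Longrightarrow> - 1/2 \<le> Vk k r"
  using abs_k_squared_ge_1 unfolding Vk_def by simp

lemma Vk_continuous_on: "S \<subseteq> {0<..} \<Longrightarrow> continuous_on S (Vk k)"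
  unfolding Vk_def by (intro continuous_intros) auto

lemma w''_absolutely_integrable_on: "0 < a \<Longrightarrow> w'' absolutely_integrable_on {a..b}"
proof (cases "a \<le> b")
  case True
  assume a: "0 < a"
  have L: "L2_on {a..b} w''" using w''_L2_on_Icc[OF a True] .
  show ?thesis
  proof (rule measurable_bounded_by_integrable_imp_absolutely_integrable)
    show "w'' \<in> borel_measurable (lebesgue_on {a..b})" using L2_on_borel_measurable[OF L] by simp
    show "(\<lambda>x. (1 + (cmod (w'' x))\<^sup>2) / 2) integrable_on {a..b}"
      using L unfolding L2_on_def by (intro integrable_on_divide integrable_add) auto
    show "cmod (w'' x) \<le> (1 + (cmod (w'' x))\<^sup>2) / 2" for x
      using sum_squares_bound[of 1 "cmod (w'' x)"] by (simp add: power2_eq_square)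
  qed auto
qed simp

lemma w'_continuous_on_Icc: "0 < a \<Longrightarrow> continuous_on {a..b} w'"
proof (cases "a \<le> b")
  case True
  assume a: "0 < a"
  have "continuous_on {a..b} (\<lambda>x. w' a + integral {a..x} w'')"
    by (intro continuous_on_add continuous_on_const indefinite_integral_continuous_1
        w''_integrable_on_Icc[OF a True])
  moreover have "w' a + integral {a..x} w'' = w' x" if "x \<in> {a..b}" for x
    using w'_diff_eq_integral[of a x] that a by (metis atLeastAtMost_iff add.commute diff_add_cancel)
  ultimately show ?thesis using continuous_on_eq by blast
qed simp

lemma w'_continuous_on: "S \<subseteq> {0<..} \<Longrightarrow> continuous_on S w'"
proof (intro continuous_at_imp_continuous_on ballI)
  fix r assume "S \<subseteq> {0<..}" "r \<in> S"
  then have r: "0 < r" by auto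
  have "continuous_on {r/2..2*r} w'" using w'_continuous_on_Icc[of "r/2" "2*r"] r by simp
  moreover have "r \<in> interior {r/2..2*r}" using r by auto
  ultimately show "isCont w' r" by (rule continuous_on_interior)
qed

lemma w_continuous_on: "S \<subseteq> {0<..} \<Longrightarrow> continuous_on S w"
  using w_has_vector_derivative has_vector_derivative_continuous
  by (intro continuous_at_imp_continuous_on ballI) blast

lemma wsq_has_real_derivative: "0 < r \<Longrightarrow> (wsq has_real_derivative wsq' r) (at r)"
proof -
  assume r: "0 < r"
  have "((\<lambda>x. w x * cnj (w x)) has_vector_derivative (w r * cnj (w' r) + w' r * cnj (w r))) (at r)"
    using w_has_vector_derivative[OF r]
    by (intro has_vector_derivative_mult has_vector_derivative_cnj)
  from bounded_linear.has_vector_derivative[OF bounded_linear_Re this]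
  show ?thesis unfolding wsq_def[abs_def] wsq'_def
    by (simp add: has_real_derivative_iff_has_vector_derivative mult.commute
             flip: complex_norm_square)
qed

lemma wsq_continuous_on: "S \<subseteq> {0<..} \<Longrightarrow> continuous_on S wsq"
  unfolding wsq_def[abs_def] using w_continuous_on by (intro continuous_intros)

lemma wsq_nonneg: "0 \<le> wsq r"
  unfolding wsq_def by simp

lemma wsq_integrable_on: "wsq integrable_on {0<..}"
  using w_L2_on unfolding L2_on_def wsq_def[abs_def] by auto

lemma wsq_integrable_on_Icc: "0 < a \<Longrightarrow> wsq integrable_on {a..b}"
  by (rule integrable_on_subinterval[OF wsq_integrable_on]) auto

lemma integral_Icc_wsq_le: "0 < a \<Longrightarrow> integral {a..b} wsq \<le> integral {0<..} wsq"
  using wsq_integrable_on_Icc wsq_integrable_on wsq_nonneg by (intro integral_subset_le) auto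

lemma Re_Aw_mult_cnj_w:
  "Re (Aw r * cnj (w r)) = - Re (cnj (w r) * w'' r) + Vk k r * wsq r"
proof -
  have ww: "w r * cnj (w r) = of_real (wsq r)" unfolding wsq_def by (rule complex_norm_square[symmetric])
  have "Aw r * cnj (w r) = - (cnj (w r) * w'' r) + of_real (Vk k r) * (w r * cnj (w r))
        + \<i> * of_real \<beta> * (w r * cnj (w r)) / of_real (r\<^sup>2)"
    by (simp add: Aw_def algebra_simps)
  also have "\<dots> = - (cnj (w r) * w'' r) + of_real (Vk k r * wsq r) + \<i> * of_real (\<beta> * wsq r / r\<^sup>2)"
    unfolding ww by simp
  finally show ?thesis by simp
qed

lemma Aw_mult_cnj_w_integrable_on_Icc:
  assumes "0 < a"
  shows "(\<lambda>r. Aw r * cnj (w r)) integrable_on {a..b}"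
proof -
  have sub: "{a..b} \<subseteq> {0<..}" using assms by auto
  have wc: "continuous_on {a..b} (\<lambda>x. cnj (w x))"
    using w_continuous_on[OF sub] by (intro continuous_intros)
  have "(\<lambda>x. cnj (w x) * w'' x) absolutely_integrable_on {a..b}"
  proof (rule absolutely_integrable_bounded_measurable_product[OF bilinear_times])
    show "(\<lambda>x. cnj (w x)) \<in> borel_measurable (lebesgue_on {a..b})"
      by (rule continuous_imp_measurable_on_sets_lebesgue[OF wc]) auto
    show "bounded ((\<lambda>x. cnj (w x)) ` {a..b})"
      by (intro compact_imp_bounded compact_continuous_image compact_Icc wc)
  qed (use w''_absolutely_integrable_on[OF assms] in auto)
  moreover have "(\<lambda>r. (of_real (Vk k r) * w r + \<i> * of_real \<beta> * w r / of_real (r\<^sup>2)) * cnj (w r))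
      integrable_on {a..b}"
    using Vk_continuous_on[OF sub] w_continuous_on[OF sub] sub
    by (intro integrable_continuous_interval continuous_intros) auto
  ultimately have "(\<lambda>r. - (cnj (w r) * w'' r)
      + (of_real (Vk k r) * w r + \<i> * of_real \<beta> * w r / of_real (r\<^sup>2)) * cnj (w r)) integrable_on {a..b}"
    by (intro integrable_add integrable_neg) (auto simp: absolutely_integrable_on_def)
  then show ?thesis by (simp add: Aw_def algebra_simps)
qed

lemma has_integral_norm_w'_square:
  assumes a: "0 < a" and ab: "a \<le> b"
  shows "((\<lambda>r. (cmod (w' r))\<^sup>2 + Re (cnj (w r) * w'' r)) has_integral
           (Re (cnj (w b) * w' b) - Re (cnj (w a) * w' a))) {a..b}"
proof -
  have "((\<lambda>r. cnj (w' r) * w' r + cnj (w r) * w'' r) has_integral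
          (cnj (w b) * w' b - cnj (w a) * w' a)) {a..b}"
  proof (rule integration_by_parts_indefinite_integral[OF ab w''_absolutely_integrable_on[OF a]])
    show "w' y - w' x = integral {x..y} w''" if "a \<le> x" "x \<le> y" "y \<le> b" for x y
      using w'_diff_eq_integral that a by auto
    show "((\<lambda>r. cnj (w r)) has_vector_derivative cnj (w' x)) (at x within {a..b})"
      if "x \<in> {a..b}" for x
      by (rule has_vector_derivative_cnj[OF has_vector_derivative_at_within[OF w_has_vector_derivative]])
         (use that a in auto)
    show "continuous_on {a..b} (\<lambda>r. cnj (w' r))"
      using w'_continuous_on_Icc[OF a] by (rule continuous_on_cnj)
  qed
  from has_integral_Re[OF this]
  have "((\<lambda>r. Re (cnj (w' r) * w' r + cnj (w r) * w'' r)) has_integral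
          Re (cnj (w b) * w' b - cnj (w a) * w' a)) {a..b}" .
  moreover have "Re (cnj z * z + u) = (cmod z)\<^sup>2 + Re u" for z u :: complex
    unfolding cmod_power2 by (simp add: power2_eq_square)
  ultimately show ?thesis by (simp only: minus_complex.sel)
qed

lemma multiplier_identity:
  assumes a0: "0 < a" and ab: "a \<le> b"
    and qd: "\<And>x. x \<in> {a..b} \<Longrightarrow> (q has_real_derivative q' x) (at x)"
    and q'c: "continuous_on {a..b} q'"
  shows "Re (integral {a..b} (\<lambda>r. Aw r * cnj (w r))) =
     integral {a..b} (\<lambda>r. (cmod (w' r - of_real (q r) * w r))\<^sup>2)
   + integral {a..b} (\<lambda>r. (Vk k r - q' r - (q r)\<^sup>2) * wsq r)
   + (q b * wsq b - Re (w' b * cnj (w b))) - (q a * wsq a - Re (w' a * cnj (w a)))"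
proof -
  have sub: "{a..b} \<subseteq> {0<..}" using a0 by auto
  have qc: "continuous_on {a..b} q"
    using qd by (intro continuous_at_imp_continuous_on ballI DERIV_isCont) auto
  have Re_pairing_integral:
    "((\<lambda>r. Re (Aw r * cnj (w r))) has_integral Re (integral {a..b} (\<lambda>r. Aw r * cnj (w r)))) {a..b}"
    by (rule has_integral_Re[OF integrable_integral[OF Aw_mult_cnj_w_integrable_on_Icc[OF a0]]])
  have q_wsq_integral: "((\<lambda>r. q' r * wsq r + q r * wsq' r) has_integral (q b * wsq b - q a * wsq a)) {a..b}"
  proof (rule fundamental_theorem_of_calculus[OF ab])
    fix x assume x: "x \<in> {a..b}"
    have "((\<lambda>x. q x * wsq x) has_real_derivative q' x * wsq x + q x * wsq' x) (at x)"
      using qd[OF x] wsq_has_real_derivative[of x] x a0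
      by (auto intro!: derivative_eq_intros)
    then show "((\<lambda>x. q x * wsq x) has_vector_derivative q' x * wsq x + q x * wsq' x)
        (at x within {a..b})"
      unfolding has_real_derivative_iff_has_vector_derivative by (rule has_vector_derivative_at_within)
  qed
  define A where "A r = (cmod (w' r - of_real (q r) * w r))\<^sup>2" for r
  define B where "B r = (Vk k r - q' r - (q r)\<^sup>2) * wsq r" for r
  have Ai: "A integrable_on {a..b}"
    unfolding A_def using w'_continuous_on_Icc[OF a0] w_continuous_on[OF sub] qc
    by (intro integrable_continuous_interval continuous_intros)
  have Bi: "B integrable_on {a..b}"
    unfolding B_def using Vk_continuous_on[OF sub] q'c qc wsq_continuous_on[OF sub]
    by (intro integrable_continuous_interval continuous_intros)
  have "A r + B r = ((cmod (w' r))\<^sup>2 + Re (cnj (w r) * w'' r)) - (q' r * wsq r + q r * wsq' r)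
                   + Re (Aw r * cnj (w r))" for r
    unfolding A_def B_def norm_diff_of_real_mult_square Re_Aw_mult_cnj_w wsq_def wsq'_def
    by (simp add: algebra_simps)
  then have "((\<lambda>r. A r + B r) has_integral
        ((Re (cnj (w b) * w' b) - Re (cnj (w a) * w' a)) - (q b * wsq b - q a * wsq a)
         + Re (integral {a..b} (\<lambda>r. Aw r * cnj (w r))))) {a..b}"
    using has_integral_add[OF has_integral_diff[OF has_integral_norm_w'_square[OF a0 ab] q_wsq_integral] Re_pairing_integral]
    by simp
  moreover have "((\<lambda>r. A r + B r) has_integral (integral {a..b} A + integral {a..b} B)) {a..b}"
    using Ai Bi by (intro has_integral_add) (auto simp: has_integral_integral)
  ultimately have "integral {a..b} A + integral {a..b} B =
     (Re (cnj (w b) * w' b) - Re (cnj (w a) * w' a)) - (q b * wsq b - q a * wsq a)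
     + Re (integral {a..b} (\<lambda>r. Aw r * cnj (w r)))"
    using has_integral_unique by blast
  then show ?thesis unfolding A_def B_def by (simp add: mult.commute)
qed

lemma Aw_mult_cnj_w_absolutely_integrable: "(\<lambda>r. Aw r * cnj (w r)) absolutely_integrable_on {0<..}"
  using L2_on_mult_cnj_absolutely_integrable[OF Aw_L2_on w_L2_on] by simp

lemma Re_integral_Icc_Aw_le_pairing:
  assumes "\<epsilon> > 0"
  shows "\<exists>\<delta>>0. \<exists>R. \<forall>a b. 0 < a \<and> a < \<delta> \<and> R < b \<longrightarrow>
           Re (integral {a..b} (\<lambda>r. Aw r * cnj (w r))) \<le> pairing + \<epsilon>"
proof -
  obtain \<delta> R where "\<delta> > 0" and approx: "\<And>a b. 0 < a \<and> a < \<delta> \<and> R < b \<Longrightarrow>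
     norm (integral {a..b} (\<lambda>r. Aw r * cnj (w r)) - integral {0<..} (\<lambda>r. Aw r * cnj (w r))) < \<epsilon>"
    using integral_Icc_approx_Ioi[OF Aw_mult_cnj_w_absolutely_integrable assms] by blast
  have "Re (integral {a..b} (\<lambda>r. Aw r * cnj (w r))) \<le> pairing + \<epsilon>"
    if "0 < a \<and> a < \<delta> \<and> R < b" for a b
  proof -
    have "Re (integral {a..b} (\<lambda>r. Aw r * cnj (w r))) - pairing
      \<le> norm (integral {a..b} (\<lambda>r. Aw r * cnj (w r)) - integral {0<..} (\<lambda>r. Aw r * cnj (w r)))"
      unfolding pairing_def minus_complex.sel(1)[symmetric] by (rule complex_Re_le_cmod)
    then show ?thesis using approx[OF that] by linarith
  qed
  then show ?thesis using \<open>\<delta> > 0\<close> by blast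
qed

lemma multiplier_bound:
  fixes f B :: "real \<Rightarrow> real" and c :: real
  assumes nn: "\<And>x. x > 0 \<Longrightarrow> 0 \<le> f x"
    and li: "\<And>a b. 0 < a \<Longrightarrow> f integrable_on {a..b}"
    and c0: "c \<ge> 0"
    and ineq: "\<And>a b. 0 < a \<Longrightarrow> a \<le> b \<Longrightarrow> integral {a..b} f
        \<le> Re (integral {a..b} (\<lambda>r. Aw r * cnj (w r))) + c * integral {a..b} wsq + B a - B b"
    and near0: "\<And>\<epsilon> \<delta>. \<epsilon> > 0 \<Longrightarrow> \<delta> > 0 \<Longrightarrow> \<exists>a. 0 < a \<and> a < \<delta> \<and> B a \<le> \<epsilon>"
    and near_top: "\<And>\<epsilon> R. \<epsilon> > 0 \<Longrightarrow> \<exists>b. R < b \<and> - \<epsilon> \<le> B b"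
  shows "f integrable_on {0<..}" and "integral {0<..} f \<le> pairing + c * integral {0<..} wsq"
proof -
  have "\<exists>a b. 0 < a \<and> a < \<delta> \<and> R < b \<and> integral {a..b} f \<le> pairing + c * integral {0<..} wsq + \<epsilon>"
    if e: "\<epsilon> > 0" and d: "\<delta> > 0" for \<epsilon> \<delta> R
  proof -
    have "\<epsilon> / 3 > 0" using e by simp
    then obtain \<delta>0 R0 where d0: "\<delta>0 > 0" and approx: "\<And>a b. 0 < a \<and> a < \<delta>0 \<and> R0 < b \<Longrightarrow>
        Re (integral {a..b} (\<lambda>r. Aw r * cnj (w r))) \<le> pairing + \<epsilon> / 3"
      using Re_integral_Icc_Aw_le_pairing by blast
    obtain a where a: "0 < a" "a < min \<delta> \<delta>0" "B a \<le> \<epsilon> / 3"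
      using near0[of "\<epsilon> / 3" "min \<delta> \<delta>0"] e d d0 by auto
    obtain b where b: "max (max R R0) a < b" "- (\<epsilon> / 3) \<le> B b"
      using near_top[of "\<epsilon> / 3" "max (max R R0) a"] e by auto
    have "c * integral {a..b} wsq \<le> c * integral {0<..} wsq"
      by (intro mult_left_mono integral_Icc_wsq_le a(1) c0)
    moreover have "Re (integral {a..b} (\<lambda>r. Aw r * cnj (w r))) \<le> pairing + \<epsilon> / 3"
      by (rule approx) (use a b in auto)
    moreover have "integral {a..b} f
        \<le> Re (integral {a..b} (\<lambda>r. Aw r * cnj (w r))) + c * integral {a..b} wsq + B a - B b"
      by (rule ineq) (use a b in auto)
    ultimately have "integral {a..b} f \<le> pairing + c * integral {0<..} wsq + \<epsilon>"
      using a(3) b(2) by linarith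
    then show ?thesis using a b by (intro exI[of _ a] exI[of _ b]) auto
  qed
  note bound = this
  show "f integrable_on {0<..}"
    by (rule nonneg_integrable_Ioi_if_Icc_bounded(1)[OF nn li bound])
  show "integral {0<..} f \<le> pairing + c * integral {0<..} wsq"
    by (rule nonneg_integrable_Ioi_if_Icc_bounded(2)[OF nn li bound])
qed

lemma exists_r_wsq_deriv_ge_near_0:
  assumes "0 < \<epsilon>" "0 < \<delta>"
  shows "\<exists>a. 0 < a \<and> a < \<delta> \<and> - \<epsilon> * a \<le> wsq a + a * wsq' a"
proof (rule exists_deriv_ge_near_0[OF _ _ _ assms])
  show "((\<lambda>r. r * wsq r) has_real_derivative wsq x + x * wsq' x) (at x)" if "0 < x" for x
    using that by (auto intro!: derivative_eq_intros wsq_has_real_derivative)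
  show "0 \<le> x * wsq x" if "0 < x" for x using that wsq_nonneg by simp
  show "\<exists>t. 0 < t \<and> t < d \<and> t * wsq t < \<eta>" if "0 < \<eta>" "0 < d" for \<eta> d
    using exists_mult_less_near_0[OF wsq_integrable_on _ that] wsq_nonneg by blast
qed

lemma exists_r_wsq_deriv_le_near_top:
  assumes "0 < \<epsilon>"
  shows "\<exists>b. R < b \<and> wsq b + b * wsq' b \<le> \<epsilon>"
proof (rule exists_deriv_le_near_top[OF _ _ _ assms])
  show "((\<lambda>r. r * wsq r) has_real_derivative wsq x + x * wsq' x) (at x)" if "0 < x" for x
    using that by (auto intro!: derivative_eq_intros wsq_has_real_derivative)
  show "0 \<le> x * wsq x" if "0 < x" for x using that wsq_nonneg by simp
  show "\<exists>b. R < b \<and> b * wsq b < 1" for R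
    using exists_mult_less_near_top[OF wsq_integrable_on, of 1 R] wsq_nonneg by simp
qed

definition v :: "real \<Rightarrow> complex" where
  "v r = w' r + w r / of_real (2 * r)"

lemma v_continuous_on: "S \<subseteq> {0<..} \<Longrightarrow> continuous_on S v"
  unfolding v_def[abs_def] using w'_continuous_on w_continuous_on
  by (intro continuous_intros) auto

lemma norm_v_square_integrable_on_Icc: "0 < a \<Longrightarrow> (\<lambda>r. (cmod (v r))\<^sup>2) integrable_on {a..b}"
  using v_continuous_on[of "{a..b}"]
  by (intro integrable_continuous_interval continuous_intros) (simp add: subset_eq)

text \<open>The multiplier \<open>q = - 1 / (2 r)\<close> leaves the potential
  \<open>(k\<^sup>2 - 1) / r\<^sup>2 + r\<^sup>2 / 16 - 1 / 2 \<ge> - 1 / 2\<close>, so \<open>v = (\<surd>r w)' / \<surd>r\<close> is square integrable.\<close>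

lemma norm_v_square_integrable: "(\<lambda>r. (cmod (v r))\<^sup>2) integrable_on {0<..}"
proof (rule multiplier_bound(1)[where c = "1/2"
      and B = "\<lambda>r. - (1 / (2 * r)) * wsq r - Re (w' r * cnj (w r))"])
  show "\<exists>a. 0 < a \<and> a < \<delta> \<and> - (1 / (2 * a)) * wsq a - Re (w' a * cnj (w a)) \<le> \<epsilon>"
    if e: "0 < \<epsilon>" and d: "0 < \<delta>" for \<epsilon> \<delta>
  proof -
    obtain a where a: "0 < a" "a < \<delta>" "- (2 * \<epsilon>) * a \<le> wsq a + a * wsq' a"
      using exists_r_wsq_deriv_ge_near_0[of "2 * \<epsilon>" \<delta>] e d by auto
    then show ?thesis unfolding wsq'_def by (intro exI[of _ a]) (simp add: field_simps)
  qed
  show "\<exists>b. R < b \<and> - \<epsilon> \<le> - (1 / (2 * b)) * wsq b - Re (w' b * cnj (w b))" if e: "0 < \<epsilon>" for \<epsilon> R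
  proof -
    obtain b where b: "max R 1 < b" "wsq b + b * wsq' b \<le> 2 * \<epsilon>"
      using exists_r_wsq_deriv_le_near_top[of "2 * \<epsilon>" "max R 1"] e by auto
    moreover have "2 * \<epsilon> * 1 \<le> 2 * \<epsilon> * b" using e b(1) by (intro mult_left_mono) auto
    ultimately have "wsq b + b * wsq' b \<le> 2 * \<epsilon> * b" by linarith
    then show ?thesis using b unfolding wsq'_def by (intro exI[of _ b]) (simp add: field_simps)
  qed
  fix a b :: real assume a: "0 < a" and ab: "a \<le> b"
  have sub: "{a..b} \<subseteq> {0<..}" using a by auto
  have "Re (integral {a..b} (\<lambda>r. Aw r * cnj (w r))) =
      integral {a..b} (\<lambda>r. (cmod (w' r - of_real (- (1 / (2 * r))) * w r))\<^sup>2)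
    + integral {a..b} (\<lambda>r. (Vk k r - 1 / (2 * r\<^sup>2) - (- (1 / (2 * r)))\<^sup>2) * wsq r)
    + (- (1 / (2 * b)) * wsq b - Re (w' b * cnj (w b)))
    - (- (1 / (2 * a)) * wsq a - Re (w' a * cnj (w a)))"
    using sub
    by (intro multiplier_identity[OF a ab]) (auto intro!: derivative_eq_intros continuous_intros
        simp: power2_eq_square field_simps)
  moreover have "integral {a..b} (\<lambda>r. (cmod (w' r - of_real (- (1 / (2 * r))) * w r))\<^sup>2)
      = integral {a..b} (\<lambda>r. (cmod (v r))\<^sup>2)"
    using sub by (intro integral_cong) (auto simp: v_def)
  moreover have "- (1/2) * integral {a..b} wsq
      \<le> integral {a..b} (\<lambda>r. (Vk k r - 1 / (2 * r\<^sup>2) - (- (1 / (2 * r)))\<^sup>2) * wsq r)"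
  proof -
    have "(Vk k r - 1 / (2 * r\<^sup>2) - (- (1 / (2 * r)))\<^sup>2) = ((real_of_int k)\<^sup>2 - 1) / r\<^sup>2 + r\<^sup>2 / 16 - 1/2"
      if "0 < r" for r
      unfolding Vk_def using that by (simp add: field_simps power2_eq_square)
    then have "- (1/2) * wsq r \<le> (Vk k r - 1 / (2 * r\<^sup>2) - (- (1 / (2 * r)))\<^sup>2) * wsq r"
      if "0 < r" for r
      using that abs_k_squared_ge_1 wsq_nonneg[of r] by (intro mult_right_mono) auto
    then show ?thesis
      using sub Vk_continuous_on[OF sub] wsq_continuous_on[OF sub] wsq_integrable_on_Icc[OF a]
      by (subst integral_mult_right[symmetric], intro integral_le)
         (auto intro!: integrable_continuous_interval continuous_intros integrable_on_mult_right)
  qed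
  ultimately show "integral {a..b} (\<lambda>r. (cmod (v r))\<^sup>2) \<le> Re (integral {a..b} (\<lambda>r. Aw r * cnj (w r)))
      + 1/2 * integral {a..b} wsq + (- (1 / (2 * a)) * wsq a - Re (w' a * cnj (w a)))
      - (- (1 / (2 * b)) * wsq b - Re (w' b * cnj (w b)))"
    by linarith
qed (auto intro: norm_v_square_integrable_on_Icc)

definition u :: "real \<Rightarrow> complex" where
  "u r = of_real (sqrt r) * w r"

lemma u_has_vector_derivative:
  assumes r: "0 < r"
  shows "(u has_vector_derivative (of_real (sqrt r) * v r)) (at r)"
proof -
  have "((\<lambda>x. of_real (sqrt x) :: complex) has_vector_derivative of_real (inverse (sqrt r) / 2)) (at r)"
    by (rule has_vector_derivative_of_real[OF DERIV_real_sqrt[OF r]])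
  then have "(u has_vector_derivative (of_real (sqrt r) * w' r + of_real (inverse (sqrt r) / 2) * w r)) (at r)"
    unfolding u_def[abs_def] by (rule has_vector_derivative_mult[OF _ w_has_vector_derivative[OF r]])
  moreover have "inverse (sqrt r) / 2 = sqrt r / (2 * r)"
  proof -
    have "sqrt r / (2 * r) = sqrt r / (2 * (sqrt r * sqrt r))" using r by simp
    then show ?thesis using r by (simp add: field_simps)
  qed
  ultimately show ?thesis unfolding v_def by (simp add: algebra_simps)
qed

lemma norm_u_square: "0 < r \<Longrightarrow> (cmod (u r))\<^sup>2 = r * wsq r"
  unfolding u_def wsq_def by (simp add: norm_mult power_mult_distrib)

lemma integral_norm_v_square_small_near_0:
  assumes e: "\<eta> > 0"
  shows "\<exists>\<delta>>0. \<forall>t a. 0 < t \<and> t \<le> a \<and> a < \<delta> \<longrightarrow> integral {t..a} (\<lambda>r. (cmod (v r))\<^sup>2) < \<eta>"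
proof -
  let ?f = "\<lambda>r. (cmod (v r))\<^sup>2"
  have "?f absolutely_integrable_on {0<..}"
    using norm_v_square_integrable by (intro nonnegative_absolutely_integrable_1) auto
  then obtain \<delta> R where d: "\<delta> > 0" and approx: "\<And>a b. 0 < a \<and> a < \<delta> \<and> R < b \<Longrightarrow>
      norm (integral {a..b} ?f - integral {0<..} ?f) < \<eta> / 2"
    using integral_Icc_approx_Ioi[of ?f "\<eta> / 2"] e by auto
  have "integral {t..a} ?f < \<eta>" if ta: "0 < t" "t \<le> a" "a < \<delta>" for t a
  proof -
    define y where "y = max R a + 1"
    have y: "R < y" "a \<le> y" unfolding y_def by auto
    have "integral {t..a} ?f + integral {a..y} ?f = integral {t..y} ?f"
      using Henstock_Kurzweil_Integration.integral_combine[OF ta(2) y(2)]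
        norm_v_square_integrable_on_Icc[OF ta(1)] by auto
    moreover have "norm (integral {t..y} ?f - integral {0<..} ?f) < \<eta> / 2"
      and "norm (integral {a..y} ?f - integral {0<..} ?f) < \<eta> / 2"
      using approx ta y by auto
    ultimately show ?thesis unfolding real_norm_def abs_less_iff by linarith
  qed
  then show ?thesis using d by blast
qed

lemma u_increment_le_near_0:
  assumes th: "\<theta> > 0"
  shows "\<exists>a0>0. \<forall>t a. 0 < t \<and> t \<le> a \<and> a < a0 \<longrightarrow> cmod (u a - u t) \<le> \<theta> * a"
proof -
  have "\<theta>\<^sup>2 > 0" using th by simp
  then obtain \<delta> where d: "\<delta> > 0"
    and small: "\<And>t a. 0 < t \<and> t \<le> a \<and> a < \<delta> \<Longrightarrow> integral {t..a} (\<lambda>r. (cmod (v r))\<^sup>2) < \<theta>\<^sup>2"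
    using integral_norm_v_square_small_near_0 by blast
  have "cmod (u a - u t) \<le> \<theta> * a" if ta: "0 < t" "t \<le> a" "a < \<delta>" for t a
  proof -
    define c where "c = a / \<theta>"
    have c0: "c > 0" unfolding c_def using ta th by simp
    have ftc: "((\<lambda>r. of_real (sqrt r) * v r) has_integral (u a - u t)) {t..a}"
    proof (rule fundamental_theorem_of_calculus[OF ta(2)])
      fix x assume "x \<in> {t..a}"
      with ta show "(u has_vector_derivative of_real (sqrt x) * v x) (at x within {t..a})"
        by (intro has_vector_derivative_at_within[OF u_has_vector_derivative]) auto
    qed
    \<comment> \<open>AM-GM with weight \<open>c\<close>: \<open>\<surd>r |v r| \<le> (c |v r|\<^sup>2 + r / c) / 2\<close>\<close>
    have pw: "cmod (of_real (sqrt r) * v r) \<le> (c * (cmod (v r))\<^sup>2 + a / c) / 2" if r: "r \<in> {t..a}" for r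
    proof -
      have "0 \<le> (c * cmod (v r) - sqrt r)\<^sup>2" by simp
      then have "2 * c * (sqrt r * cmod (v r)) \<le> c * (c * (cmod (v r))\<^sup>2) + a"
        using r ta by (simp add: power2_eq_square algebra_simps)
      then show ?thesis using c0 r ta by (simp add: norm_mult field_simps power2_eq_square)
    qed
    have vi: "(\<lambda>r. (cmod (v r))\<^sup>2) integrable_on {t..a}"
      using norm_v_square_integrable_on_Icc ta by auto
    have "cmod (u a - u t) = cmod (integral {t..a} (\<lambda>r. of_real (sqrt r) * v r))"
      using ftc by (simp add: integral_unique)
    also have "\<dots> \<le> integral {t..a} (\<lambda>r. (c * (cmod (v r))\<^sup>2 + a / c) / 2)"
      using ftc vi pw
      by (intro integral_norm_bound_integral)
         (auto simp: has_integral_integrable intro!: integrable_on_divide integrable_add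
               integrable_on_mult_right)
    also have "\<dots> = (c * integral {t..a} (\<lambda>r. (cmod (v r))\<^sup>2) + a / c * (a - t)) / 2"
    proof -
      have "integral {t..a} (\<lambda>r. c * (cmod (v r))\<^sup>2 + a / c)
          = integral {t..a} (\<lambda>r. c * (cmod (v r))\<^sup>2) + integral {t..a} (\<lambda>r. a / c)"
        using vi by (intro integral_add integrable_on_mult_right) auto
      then show ?thesis using ta by simp
    qed
    also have "\<dots> \<le> (c * \<theta>\<^sup>2 + a / c * a) / 2"
      using small[of t a] ta c0 th
      by (intro divide_right_mono add_mono mult_left_mono) auto
    also have "\<dots> = \<theta> * a"
      unfolding c_def using th ta by (simp add: field_simps power2_eq_square)
    finally show ?thesis .
  qed
  then show ?thesis using d by blast
qed

text \<open>The Hardy-type decay \<open>|w r|\<^sup>2 = o(r)\<close> at \<open>0\<close>: \<open>\<surd>r w\<close> has increments \<open>o(r)\<close> there, and is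
  frequently \<open>o(r)\<close> itself because \<open>|w|\<^sup>2\<close> is integrable.\<close>

lemma wsq_le_near_0:
  assumes th: "\<theta> > 0"
  shows "\<exists>a0>0. \<forall>a. 0 < a \<and> a < a0 \<longrightarrow> wsq a \<le> \<theta> * a"
proof -
  define \<theta>1 where "\<theta>1 = sqrt \<theta> / 2"
  have t1: "\<theta>1 > 0" "4 * \<theta>1\<^sup>2 = \<theta>" unfolding \<theta>1_def using th by (simp_all add: power_divide)
  obtain a0 where a0: "a0 > 0"
    and incr: "\<And>t a. 0 < t \<and> t \<le> a \<and> a < a0 \<Longrightarrow> cmod (u a - u t) \<le> \<theta>1 * a"
    using u_increment_le_near_0[OF t1(1)] by blast
  have "wsq a \<le> \<theta> * a" if a: "0 < a" "a < a0" for a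
  proof -
    have ua: "cmod (u a) \<le> 2 * \<theta>1 * a"
    proof (rule ccontr)
      assume neg: "\<not> ?thesis"
      have low: "\<theta>1 * a \<le> cmod (u t)" if "0 < t" "t \<le> a" for t
        using norm_triangle_ineq2[of "u a" "u t"] incr[of t a] that a neg by linarith
      have "(\<theta>1 * a)\<^sup>2 > 0" using t1 a by simp
      then obtain t where t: "0 < t" "t < a" "t * wsq t < (\<theta>1 * a)\<^sup>2"
        using exists_mult_less_near_0[OF wsq_integrable_on, of "(\<theta>1 * a)\<^sup>2" a] wsq_nonneg a by auto
      have "(\<theta>1 * a)\<^sup>2 \<le> (cmod (u t))\<^sup>2" using low[of t] t t1 a by (intro power_mono) auto
      then show False using t norm_u_square[of t] by linarith
    qed
    have "a * wsq a = (cmod (u a))\<^sup>2" using norm_u_square[of a] a by simp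
    also have "\<dots> \<le> (2 * \<theta>1 * a)\<^sup>2" using ua by (intro power_mono) auto
    also have "\<dots> = a * (\<theta> * a)" using t1 by (simp add: power2_eq_square algebra_simps)
    finally show ?thesis using a by simp
  qed
  then show ?thesis using a0 by blast
qed

lemma exists_wsq'_ge_near_0:
  assumes e: "0 < \<epsilon>" and d: "0 < \<delta>"
  shows "\<exists>a. 0 < a \<and> a < \<delta> \<and> - \<epsilon> \<le> wsq' a"
proof -
  obtain a0 where a0: "a0 > 0" and le: "\<And>a. 0 < a \<and> a < a0 \<Longrightarrow> wsq a \<le> 1 * a"
    using wsq_le_near_0[of 1] by auto
  have "\<exists>a. 0 < a \<and> a < min \<delta> 1 \<and> - \<epsilon> * a \<le> wsq' a"
  proof (rule exists_deriv_ge_near_0[OF wsq_has_real_derivative wsq_nonneg _ e])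
    show "\<exists>t. 0 < t \<and> t < s \<and> wsq t < \<eta>" if "0 < \<eta>" "0 < s" for \<eta> s
    proof -
      define t where "t = min (min s a0) \<eta> / 2"
      have "0 < t" "t < s" "t < a0" "t < \<eta>" using that a0 unfolding t_def by auto
      then show ?thesis using le[of t] by (intro exI[of _ t]) auto
    qed
  qed (use d in auto)
  then obtain a where "0 < a" "a < min \<delta> 1" "- \<epsilon> * a \<le> wsq' a" by blast
  moreover have "- \<epsilon> \<le> - \<epsilon> * a" using e \<open>a < min \<delta> 1\<close> by simp
  ultimately show ?thesis by (intro exI[of _ a]) auto
qed

lemma exists_wsq'_le_near_top:
  assumes "0 < \<epsilon>"
  shows "\<exists>b. R < b \<and> wsq' b \<le> \<epsilon>"
proof (rule exists_deriv_le_near_top[OF wsq_has_real_derivative wsq_nonneg _ assms])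
  fix R :: real
  obtain b where b: "max R 1 < b" "b * wsq b < 1"
    using exists_mult_less_near_top[OF wsq_integrable_on, of 1 "max R 1"] wsq_nonneg by auto
  moreover have "wsq b \<le> b * wsq b" using b(1) wsq_nonneg[of b] by (simp add: mult_le_cancel_right1)
  ultimately show "\<exists>b. R < b \<and> wsq b < 1" by (intro exI[of _ b]) auto
qed

lemma norm_w'_square_integrable_and_bound:
  shows "(\<lambda>r. (cmod (w' r))\<^sup>2) integrable_on {0<..}"
    and "integral {0<..} (\<lambda>r. (cmod (w' r))\<^sup>2) \<le> pairing + 1/2 * integral {0<..} wsq"
proof -
  have nn: "\<And>x. 0 < x \<Longrightarrow> 0 \<le> (cmod (w' x))\<^sup>2" by simp
  have li: "\<And>a b. 0 < a \<Longrightarrow> (\<lambda>r. (cmod (w' r))\<^sup>2) integrable_on {a..b}"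
    using w'_continuous_on_Icc by (intro integrable_continuous_interval continuous_intros)
  have near0: "\<exists>a. 0 < a \<and> a < \<delta> \<and> - Re (w' a * cnj (w a)) \<le> \<epsilon>" if "0 < \<epsilon>" "0 < \<delta>" for \<epsilon> \<delta>
    using exists_wsq'_ge_near_0[of "2 * \<epsilon>" \<delta>] that unfolding wsq'_def by auto
  have near_top: "\<exists>b. R < b \<and> - \<epsilon> \<le> - Re (w' b * cnj (w b))" if "0 < \<epsilon>" for \<epsilon> R
    using exists_wsq'_le_near_top[of "2 * \<epsilon>" R] that unfolding wsq'_def by auto
  have ineq: "integral {a..b} (\<lambda>r. (cmod (w' r))\<^sup>2) \<le> Re (integral {a..b} (\<lambda>r. Aw r * cnj (w r)))
      + 1/2 * integral {a..b} wsq + - Re (w' a * cnj (w a)) - - Re (w' b * cnj (w b))"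
    if a: "0 < a" and ab: "a \<le> b" for a b
  proof -
    have sub: "{a..b} \<subseteq> {0<..}" using a by auto
    have "Re (integral {a..b} (\<lambda>r. Aw r * cnj (w r))) =
       integral {a..b} (\<lambda>r. (cmod (w' r - of_real 0 * w r))\<^sup>2)
       + integral {a..b} (\<lambda>r. (Vk k r - 0 - 0\<^sup>2) * wsq r)
       + (0 * wsq b - Re (w' b * cnj (w b))) - (0 * wsq a - Re (w' a * cnj (w a)))"
      by (rule multiplier_identity[OF a ab, of "\<lambda>_. 0" "\<lambda>_. 0"]) auto
    moreover have "integral {a..b} (\<lambda>r. - (1/2) * wsq r) \<le> integral {a..b} (\<lambda>r. Vk k r * wsq r)"
      using wsq_integrable_on_Icc[OF a] Vk_continuous_on[OF sub] wsq_continuous_on[OF sub] sub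
        Vk_ge wsq_nonneg
      by (intro integral_le integrable_on_mult_right integrable_continuous_interval
          continuous_intros mult_right_mono) auto
    ultimately show ?thesis by simp
  qed
  show "(\<lambda>r. (cmod (w' r))\<^sup>2) integrable_on {0<..}"
    by (rule multiplier_bound(1)[OF nn li _ ineq near0 near_top]) auto
  show "integral {0<..} (\<lambda>r. (cmod (w' r))\<^sup>2) \<le> pairing + 1/2 * integral {0<..} wsq"
    by (rule multiplier_bound(2)[OF nn li _ ineq near0 near_top]) auto
qed

lemma abs_k_mass_le_pairing: "\<bar>real_of_int k\<bar> / 2 * integral {0<..} wsq \<le> pairing"
proof -
  define K where "K = \<bar>real_of_int k\<bar>"
  define q where "q r = (K + 1/2) / r - r / 4" for r
  define q' where "q' r = - (K + 1/2) / r\<^sup>2 - 1/4" for r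
  have K: "1 \<le> K" unfolding K_def using abs_k_ge_1 by linarith
  have nn: "\<And>x. 0 < x \<Longrightarrow> 0 \<le> K / 2 * wsq x" using K wsq_nonneg by simp
  have li: "\<And>a b. 0 < a \<Longrightarrow> (\<lambda>r. K / 2 * wsq r) integrable_on {a..b}"
    using wsq_integrable_on_Icc by (intro integrable_on_mult_right)
  have near0: "\<exists>a. 0 < a \<and> a < \<delta> \<and> q a * wsq a - Re (w' a * cnj (w a)) \<le> \<epsilon>"
    if e: "0 < \<epsilon>" and d: "0 < \<delta>" for \<epsilon> \<delta>
  proof -
    obtain a0 where a0: "a0 > 0" and le: "\<And>a. 0 < a \<and> a < a0 \<Longrightarrow> wsq a \<le> \<epsilon> / (2 * K + 1) * a"
      using wsq_le_near_0[of "\<epsilon> / (2 * K + 1)"] e K by auto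
    obtain a where a: "0 < a" "a < min \<delta> a0" "- \<epsilon> \<le> wsq' a"
      using exists_wsq'_ge_near_0[OF e, of "min \<delta> a0"] d a0 by auto
    have "q a * wsq a \<le> (K + 1/2) / a * wsq a"
      unfolding q_def using a wsq_nonneg[of a] by (intro mult_right_mono) auto
    also have "\<dots> \<le> (K + 1/2) / a * (\<epsilon> / (2 * K + 1) * a)"
      using le[of a] a K by (intro mult_left_mono) auto
    also have "\<dots> = (K + 1/2) * (\<epsilon> / (2 * K + 1))" using a by simp
    also have "\<dots> = \<epsilon> / 2"
    proof -
      have "2 * K + 1 \<noteq> 0" using K by simp
      then show ?thesis by (simp add: field_simps)
    qed
    finally show ?thesis using a unfolding wsq'_def by (intro exI[of _ a]) auto
  qed
  have near_top: "\<exists>b. R < b \<and> - \<epsilon> \<le> q b * wsq b - Re (w' b * cnj (w b))"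
    if e: "0 < \<epsilon>" for \<epsilon> R
  proof -
    define f where "f r = (cmod (w' r))\<^sup>2 + wsq r" for r
    have fi: "f integrable_on {0<..}" unfolding f_def[abs_def]
      using norm_w'_square_integrable_and_bound(1) wsq_integrable_on by (rule integrable_add)
    have fnn: "0 \<le> f x" for x unfolding f_def using wsq_nonneg[of x] by simp
    obtain b where b: "max R 1 < b" "b * f b < \<epsilon>"
      using exists_mult_less_near_top[OF fi _ e, of "max R 1"] fnn by auto
    have "Re (w' b * cnj (w b)) \<le> cmod (w' b) * cmod (w b)"
      using complex_Re_le_cmod[of "w' b * cnj (w b)"] by (simp add: norm_mult)
    also have "\<dots> \<le> f b / 2"
      using sum_squares_bound[of "cmod (w' b)" "cmod (w b)"]
      unfolding f_def wsq_def by (simp add: power2_eq_square)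
    also have "\<dots> \<le> 1/2 * (b * f b)" using b(1) fnn[of b] by (simp add: mult_le_cancel_right1)
    finally have "Re (w' b * cnj (w b)) \<le> 1/2 * (b * f b)" .
    moreover have "- (1/4) * (b * wsq b) \<le> q b * wsq b"
    proof -
      have "- (b / 4) \<le> q b" unfolding q_def using b(1) K by simp
      from mult_right_mono[OF this wsq_nonneg] show ?thesis by simp
    qed
    moreover have "b * wsq b \<le> b * f b"
      unfolding f_def using b(1) by (intro mult_left_mono) auto
    moreover have "0 \<le> b * f b" using b(1) fnn[of b] by simp
    ultimately have "- \<epsilon> \<le> q b * wsq b - Re (w' b * cnj (w b))" using b(2) by linarith
    then show ?thesis using b(1) by auto
  qed
  have ineq: "integral {a..b} (\<lambda>r. K / 2 * wsq r) \<le> Re (integral {a..b} (\<lambda>r. Aw r * cnj (w r)))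
      + 0 * integral {a..b} wsq + (q a * wsq a - Re (w' a * cnj (w a)))
      - (q b * wsq b - Re (w' b * cnj (w b)))"
    if a: "0 < a" and ab: "a \<le> b" for a b
  proof -
    have sub: "{a..b} \<subseteq> {0<..}" using a by auto
    have "Re (integral {a..b} (\<lambda>r. Aw r * cnj (w r))) =
       integral {a..b} (\<lambda>r. (cmod (w' r - of_real (q r) * w r))\<^sup>2)
       + integral {a..b} (\<lambda>r. (Vk k r - q' r - (q r)\<^sup>2) * wsq r)
       + (q b * wsq b - Re (w' b * cnj (w b))) - (q a * wsq a - Re (w' a * cnj (w a)))"
      using sub unfolding q_def[abs_def] q'_def[abs_def]
      by (intro multiplier_identity[OF a ab])
         (auto intro!: derivative_eq_intros continuous_intros simp: power2_eq_square field_simps)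
    moreover have "Vk k r - q' r - (q r)\<^sup>2 = K / 2" if "0 < r" for r
    proof -
      have "(real_of_int k)\<^sup>2 = K * K" unfolding K_def by (simp add: power2_eq_square)
      then show ?thesis
        unfolding Vk_def q'_def q_def using that by (simp add: field_simps power2_eq_square)
    qed
    then have "integral {a..b} (\<lambda>r. (Vk k r - q' r - (q r)\<^sup>2) * wsq r)
        = integral {a..b} (\<lambda>r. K / 2 * wsq r)"
      using sub by (intro integral_cong) auto
    moreover have "0 \<le> integral {a..b} (\<lambda>r. (cmod (w' r - of_real (q r) * w r))\<^sup>2)"
      using sub w'_continuous_on_Icc[OF a] w_continuous_on[OF sub] unfolding q_def
      by (intro integral_nonneg integrable_continuous_interval continuous_intros) auto
    ultimately show ?thesis by simp
  qed
  have "integral {0<..} (\<lambda>r. K / 2 * wsq r) \<le> pairing + 0 * integral {0<..} wsq"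
    by (rule multiplier_bound(2)[OF nn li _ ineq near0 near_top]) auto
  then show ?thesis unfolding K_def by simp
qed

lemma w_tendsto_0: "(w \<longlongrightarrow> 0) (at_right 0)"
proof -
  obtain a0 where a0: "a0 > 0" and le: "\<And>a. 0 < a \<and> a < a0 \<Longrightarrow> wsq a \<le> 1 * a"
    using wsq_le_near_0[of 1] by auto
  have "\<forall>\<^sub>F r in at_right 0. norm (w r) \<le> sqrt r"
    unfolding eventually_at_right_field
  proof (intro exI[of _ a0] conjI a0 allI impI)
    fix r :: real assume "0 < r" "r < a0"
    then have "(norm (w r))\<^sup>2 \<le> r" using le[of r] unfolding wsq_def by simp
    then show "norm (w r) \<le> sqrt r" using real_le_rsqrt by blast
  qed
  moreover have "(sqrt \<longlongrightarrow> 0) (at_right 0)"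
    using tendsto_real_sqrt[OF tendsto_ident_at[of 0 "{0<..}"]] by simp
  ultimately show ?thesis using Lim_null_comparison by (auto simp: tendsto_norm_zero_iff)
qed

lemma w'_borel_measurable: "w' \<in> borel_measurable (lebesgue_on {0<..})"
  by (rule continuous_imp_measurable_on_sets_lebesgue[OF w'_continuous_on]) auto

lemma w'_L2_on: "L2_on {0<..} w'"
  unfolding L2_on_def using norm_w'_square_integrable_and_bound(1) w'_borel_measurable
  by (simp add: measurable_on_iff_borel_measurable)

lemma has_integral_w'_from_0:
  assumes b: "0 < b"
  shows "(w' has_integral w b) {0..b}"
proof -
  define S where "S = {0<..b}"
  have S: "S \<in> sets lebesgue" "S \<subseteq> {0<..}" unfolding S_def by auto
  have "(\<lambda>x. if x \<in> {..b} then (cmod (w' x))\<^sup>2 else 0) integrable_on {0<..}"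
  proof (rule measurable_bounded_by_integrable_imp_integrable)
    have [measurable]: "(\<lambda>x::real. x) \<in> borel_measurable (lebesgue_on {0<..})"
      by (rule continuous_imp_measurable_on_sets_lebesgue) (auto intro: continuous_intros)
    show "(\<lambda>x. if x \<in> {..b} then (cmod (w' x))\<^sup>2 else 0) \<in> borel_measurable (lebesgue_on {0<..})"
      using w'_borel_measurable by measurable
  qed (use norm_w'_square_integrable_and_bound(1) in auto)
  then have "(\<lambda>r. (cmod (w' r))\<^sup>2) integrable_on ({..b} \<inter> {0<..})"
    by (simp only: integrable_restrict_Int)
  moreover have "{..b} \<inter> {0<..} = S" unfolding S_def by auto
  ultimately have sq: "(\<lambda>r. (cmod (w' r))\<^sup>2) integrable_on S" by simp
  have one: "(\<lambda>r. 1::real) integrable_on S"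
    using integrable_const_ivl[of "1::real" 0 b] unfolding S_def
    by (rule integrable_spike_set) (auto intro: negligible_subset[of "{0}"])
  have "w' absolutely_integrable_on S"
  proof (rule measurable_bounded_by_integrable_imp_absolutely_integrable[OF _ S(1)])
    show "w' \<in> borel_measurable (lebesgue_on S)"
      by (rule continuous_imp_measurable_on_sets_lebesgue[OF w'_continuous_on[OF S(2)] S(1)])
    show "(\<lambda>r. (1 + (cmod (w' r))\<^sup>2) / 2) integrable_on S"
      using one sq by (intro integrable_on_divide integrable_add)
    show "cmod (w' x) \<le> (1 + (cmod (w' x))\<^sup>2) / 2" for x
      using sum_squares_bound[of 1 "cmod (w' x)"] by (simp add: power2_eq_square)
  qed
  then have "w' integrable_on S" by (simp add: absolutely_integrable_on_def)
  then have i0: "w' integrable_on {0..b}"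
    unfolding S_def by (rule integrable_spike_set) (auto intro: negligible_subset[of "{0}"])
  have ftc: "integral {t..b} w' = w b - w t" if t: "0 < t" "t \<le> b" for t
  proof -
    have "(w' has_integral (w b - w t)) {t..b}"
    proof (rule fundamental_theorem_of_calculus[OF t(2)])
      fix x assume "x \<in> {t..b}"
      with t show "(w has_vector_derivative w' x) (at x within {t..b})"
        by (intro has_vector_derivative_at_within[OF w_has_vector_derivative]) auto
    qed
    then show ?thesis by (simp add: integral_unique)
  qed
  have "((\<lambda>x. integral {x..b} w') \<longlongrightarrow> integral {0..b} w') (at_right 0)"
    using indefinite_integral_continuous_1'[OF i0] b
    by (auto simp: continuous_on_def simp flip: at_within_Icc_at_right)
  moreover have "((\<lambda>x. integral {x..b} w') \<longlongrightarrow> w b - 0) (at_right 0)"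
  proof (rule Lim_transform_eventually)
    show "((\<lambda>x. w b - w x) \<longlongrightarrow> w b - 0) (at_right 0)"
      by (intro tendsto_intros w_tendsto_0)
    show "\<forall>\<^sub>F x in at_right 0. w b - w x = integral {x..b} w'"
      unfolding eventually_at_right_field using b ftc by (intro exI[of _ b]) auto
  qed
  ultimately have "integral {0..b} w' = w b"
    using tendsto_unique[OF trivial_limit_at_right_real] by fastforce
  then show ?thesis using i0 by (simp add: has_integral_integral)
qed

lemma H10_w: "H10 (\<lambda>r. if 0 < r then w r else 0) w'"
  unfolding H10_def
proof (intro conjI allI impI)
  have "(\<lambda>r. if 0 < r then w r else 0) measurable_on {0<..}"
    by (rule measurable_on_spike[OF _ negligible_empty]) (use w_L2_on in \<open>auto simp: L2_on_def\<close>)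
  moreover have "(\<lambda>r. (cmod (if 0 < r then w r else 0))\<^sup>2) integrable_on {0<..}
      \<longleftrightarrow> (\<lambda>r. (cmod (w r))\<^sup>2) integrable_on {0<..}"
    by (rule integrable_cong) simp
  ultimately show "L2_on {0<..} (\<lambda>r. if 0 < r then w r else 0)"
    using w_L2_on unfolding L2_on_def by simp
  show "L2_on {0<..} w'" by (rule w'_L2_on)
  fix a b :: real assume ab: "0 \<le> a \<and> a \<le> b"
  have "(w' has_integral (if 0 < b then w b else 0) - (if 0 < a then w a else 0)) {a..b}"
  proof (cases "0 < a")
    case True
    have "(w' has_integral w b - w a) {a..b}"
    proof (rule fundamental_theorem_of_calculus)
      fix x assume "x \<in> {a..b}"
      with True show "(w has_vector_derivative w' x) (at x within {a..b})"
        by (intro has_vector_derivative_at_within[OF w_has_vector_derivative]) auto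
    qed (use ab in auto)
    then show ?thesis using True ab by simp
  next
    case False
    then have "a = 0" using ab by simp
    then show ?thesis
      using has_integral_w'_from_0[of b] ab by (cases "b = 0") (auto simp: has_integral_refl)
  qed
  then show "w' integrable_on {a..b}"
    and "(if 0 < b then w b else 0) - (if 0 < a then w a else 0) = integral {a..b} w'"
    by (auto simp: integral_unique)
qed (simp)

lemma Fk_eq: "Fk k \<beta> lam w w'' r = Aw r - \<i> * of_real (\<beta> * lam) * w r"
  unfolding Fk_def Aw_def by (simp add: divide_inverse algebra_simps)

lemma Fk_L2_on: "L2_on {0<..} (Fk k \<beta> lam w w'')"
  unfolding Fk_eq[abs_def] by (rule L2_on_diff_mult[OF Aw_L2_on w_L2_on]) simp

lemma pairing_eq_Re_Fk: "pairing = Re (integral {0<..} (\<lambda>r. Fk k \<beta> lam w w'' r * cnj (w r)))"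
proof -
  have integrable: "(\<lambda>r. f r * cnj (w r)) integrable_on {0<..}" if "L2_on {0<..} f" for f
    using L2_on_mult_cnj_absolutely_integrable[OF that w_L2_on]
    by (simp add: absolutely_integrable_on_def)
  have "Re (Fk k \<beta> lam w w'' r * cnj (w r)) = Re (Aw r * cnj (w r))" for r
    unfolding Fk_eq by (simp add: algebra_simps)
  then show ?thesis
    unfolding pairing_def Re_integral[OF integrable[OF Fk_L2_on]] Re_integral[OF integrable[OF Aw_L2_on]]
    by simp
qed

lemma pairing_le_L2norm: "pairing \<le> L2norm (Fk k \<beta> lam w w'') * sqrt (integral {0<..} wsq)"
  using complex_Re_le_cmod L2norm_pairing_le[OF Fk_L2_on w_L2_on]
  unfolding pairing_eq_Re_Fk[of lam] L2norm_def wsq_def[abs_def] by (rule order_trans)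

lemma H1norm_w: "H1norm w w' = sqrt (integral {0<..} wsq + integral {0<..} (\<lambda>r. (cmod (w' r))\<^sup>2))"
proof -
  have "0 \<le> integral {0<..} wsq" "0 \<le> integral {0<..} (\<lambda>r. (cmod (w' r))\<^sup>2)"
    using wsq_integrable_on wsq_nonneg norm_w'_square_integrable_and_bound(1)
    by (auto intro: integral_nonneg)
  then show ?thesis unfolding H1norm_def L2norm_def wsq_def[abs_def] by simp
qed

lemma pairing_le_Hm1norm: "pairing \<le> Hm1norm (Fk k \<beta> lam w w'') * H1norm w w'"
proof -
  let ?w0 = "\<lambda>r. if 0 < r then w r else 0"
  have pairing_eq: "integral {0<..} (\<lambda>r. Fk k \<beta> lam w w'' r * cnj (?w0 r))
      = integral {0<..} (\<lambda>r. Fk k \<beta> lam w w'' r * cnj (w r))"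
    by (rule integral_cong) simp
  have "L2norm ?w0 = L2norm w"
    unfolding L2norm_def by (subst integral_cong[where g = "\<lambda>r. (cmod (w r))\<^sup>2"]) auto
  then have H1norm_eq: "H1norm ?w0 w' = H1norm w w'" unfolding H1norm_def by simp
  have "Re (integral {0<..} (\<lambda>r. Fk k \<beta> lam w w'' r * cnj (?w0 r)))
      \<le> Hm1norm (Fk k \<beta> lam w w'') * H1norm ?w0 w'"
    by (rule order_trans[OF complex_Re_le_cmod Hm1norm_pairing_le_mult_H1norm[OF Fk_L2_on H10_w]])
  then show ?thesis unfolding pairing_eq_Re_Fk[of lam] pairing_eq H1norm_eq .
qed

theorem a_priori_estimates:
  shows "sqrt \<bar>real_of_int k\<bar> * H1norm w w' + \<bar>real_of_int k\<bar> * L2norm w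
           \<le> 7 * L2norm (Fk k \<beta> lam w w'')"
    and "H1norm w w' + sqrt \<bar>real_of_int k\<bar> * L2norm w \<le> 7 * Hm1norm (Fk k \<beta> lam w w'')"
proof -
  define H where "H = integral {0<..} wsq"
  define D where "D = integral {0<..} (\<lambda>r. (cmod (w' r))\<^sup>2)"
  have H: "0 \<le> H" and D: "0 \<le> D"
    unfolding H_def D_def using wsq_integrable_on wsq_nonneg norm_w'_square_integrable_and_bound(1)
    by (auto intro: integral_nonneg)
  have K: "1 \<le> \<bar>real_of_int k\<bar>" using abs_k_ge_1 by linarith
  have L2norm_w: "L2norm w = sqrt H" unfolding L2norm_def H_def wsq_def[abs_def] ..
  note bounds = H D K norm_w'_square_integrable_and_bound(2)[folded D_def H_def]
    abs_k_mass_le_pairing[folded H_def]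
  show "sqrt \<bar>real_of_int k\<bar> * H1norm w w' + \<bar>real_of_int k\<bar> * L2norm w
           \<le> 7 * L2norm (Fk k \<beta> lam w w'')"
    unfolding H1norm_w L2norm_w H_def[symmetric] D_def[symmetric]
    by (rule multiplier_estimates_imp_bound_by_L2_pairing[OF bounds L2norm_nonneg
          pairing_le_L2norm[folded H_def]])
  show "H1norm w w' + sqrt \<bar>real_of_int k\<bar> * L2norm w \<le> 7 * Hm1norm (Fk k \<beta> lam w w'')"
    using pairing_le_Hm1norm[of lam]
    unfolding H1norm_w L2norm_w H_def[symmetric] D_def[symmetric]
    by (rule multiplier_estimates_imp_bound_by_H1_pairing[OF bounds Hm1norm_nonneg[OF Fk_L2_on]])
qed

end

theorem lemma2p2:
  shows "\<exists>C>0. \<forall>(k::int) (\<beta>::real) (lam::real) w w' w''.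
           \<bar>k\<bar> \<ge> 1 \<and> Dk k \<beta> w w' w'' \<longrightarrow>
             sqrt \<bar>real_of_int k\<bar> * H1norm w w' + \<bar>real_of_int k\<bar> * L2norm w
               \<le> C * L2norm (Fk k \<beta> lam w w'') \<and>
             H1norm w w' + sqrt \<bar>real_of_int k\<bar> * L2norm w
               \<le> C * Hm1norm (Fk k \<beta> lam w w'')"
proof (intro exI[of _ 7] conjI allI impI)
  fix k :: int and \<beta> lam :: real and w w' w'' :: "real \<Rightarrow> complex"
  assume "\<bar>k\<bar> \<ge> 1 \<and> Dk k \<beta> w w' w''"
  then interpret Dk_function k \<beta> w w' w'' by unfold_locales auto
  show "sqrt \<bar>real_of_int k\<bar> * H1norm w w' + \<bar>real_of_int k\<bar> * L2norm w
          \<le> 7 * L2norm (Fk k \<beta> lam w w'')"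
    and "H1norm w w' + sqrt \<bar>real_of_int k\<bar> * L2norm w \<le> 7 * Hm1norm (Fk k \<beta> lam w w'')"
    by (rule a_priori_estimates)+
qed simp

end
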